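(* For the twindragons $\mathcal B=T_{-1,1}$, $\mathcal C=T_{1,-1}$, $\mathcal D=T_{0,1}$: (a) $\mathcal C$ has exactly $20$ nonzero neighbors ($k\in\mathbb Z^3\setminus\{0\}$ with $B_k\ne\emptyset$), of which $12$ give faces and $8$ are point neighbors; (b) $\mathcal B$ has exactly $18$ nonzero neighbors, of which $14$ give faces and $4$ are point neighbors; (c) $\mathcal D$ has exactly $34$ nonzero neighbors, of which $14$ give faces, $12$ are point neighbors, and the remaining $8$ have boundary sets $B_k$ that are finite with more than one point.
   Context: For integers $a,b$ let $M_{a,b}=\begin{pmatrix}0&0&2\\1&0&b\\0&1&a\end{pmatrix}$, $e_1=(1,0,0)'$, $f_1(x)=M_{a,b}^{-1}(x-\tfrac12 e_1)$, $f_2(x)=M_{a,b}^{-1}(x+\tfrac12 e_1)$, and $T_{a,b}$ the compact set with $T_{a,b}=f_1(T_{a,b})\cup f_2(T_{a,b})$ (a twindragon; $T_{a,b}+\mathbb Z^3$ tiles $\mathbb R^3$ for the parameters considered). For $T=T_{a,b}$ and $k\in\mathbb Z^3$, $B_k=T\cap(T+k)$. A point neighbor is $k\ne0$ with $B_k$ a single point. $B_k$ ($k\neq 0$) is a face of $T$ if there are $x\in B_k$ and an open neighborhood $U$ of $x$ in $\mathbb R^3$ with $U\cap\partial T\subseteq B_k$ and $U\subseteq T\cup(T+k)$. *)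

theory Defs
  imports "HOL-Analysis.Analysis"
begin

definition Mab :: "int \<Rightarrow> int \<Rightarrow> real^3^3" where
  "Mab a b = vector [vector [0, 0, 2], vector [1, 0, real_of_int b], vector [0, 1, real_of_int a]]"

definition e1 :: "real^3" where
  "e1 = axis 1 1"

definition f1 :: "int \<Rightarrow> int \<Rightarrow> real^3 \<Rightarrow> real^3" where
  "f1 a b x = matrix_inv (Mab a b) *v (x - (1/2) *\<^sub>R e1)"

definition f2 :: "int \<Rightarrow> int \<Rightarrow> real^3 \<Rightarrow> real^3" where
  "f2 a b x = matrix_inv (Mab a b) *v (x + (1/2) *\<^sub>R e1)"

definition twindragon :: "int \<Rightarrow> int \<Rightarrow> (real^3) set" where
  "twindragon a b = (THE T. compact T \<and> T \<noteq> {} \<and> T = f1 a b ` T \<union> f2 a b ` T)"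

definition lattice3 :: "(real^3) set" where
  "lattice3 = {k. \<forall>i. k $ i \<in> \<int>}"

definition Bset :: "(real^3) set \<Rightarrow> real^3 \<Rightarrow> (real^3) set" where
  "Bset T k = T \<inter> ((\<lambda>x. x + k) ` T)"

definition neighbors :: "(real^3) set \<Rightarrow> (real^3) set" where
  "neighbors T = {k \<in> lattice3. k \<noteq> 0 \<and> Bset T k \<noteq> {}}"

definition point_neighbor :: "(real^3) set \<Rightarrow> real^3 \<Rightarrow> bool" where
  "point_neighbor T k \<longleftrightarrow> k \<noteq> 0 \<and> (\<exists>x. Bset T k = {x})"

definition is_face :: "(real^3) set \<Rightarrow> real^3 \<Rightarrow> bool" where
  "is_face T k \<longleftrightarrow> k \<noteq> 0 \<and> (\<exists>x \<in> Bset T k. \<exists>U. open U \<and> x \<in> U \<and>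
      U \<inter> frontier T \<subseteq> Bset T k \<and> U \<subseteq> T \<union> ((\<lambda>y. y + k) ` T))"

end

theory Submission
  imports Defs
begin

(* The theorem is a certified computation resting on general facts about the tiles.
   - Attractor: with f1 x = M^-1 (x - e1/2) and f2 x = M^-1 (x + e1/2), some power M^-p
     halves the l1 norm; an adapted norm turns this into uniform decay of M^-n, so the
     twindragon is the unique attractor and consists of the points admitting a bounded chain
     of digit steps y -> M y +- e1/2.
   - Geometry of the tile: T is perfect and T + Z^3 covers R^3; a point of B_k moves under a
     digit step into some B_k' with k' in {M k + e1, M k, M k - e1} (the neighbour graph);
     a point of B_k lying in no other translate T + m makes B_k a face; a finite B_k is never
     a face; if the neighbour graph forces a unique path from k, then B_k has one point.
   - Checks: lattice vectors and rational points are encoded as integer triples, and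
     executable predicates (evaluated by code_simp) are proved sound, e.g. neighbours all of
     whose paths leave a bounding box have empty B_k, finite self-expanding point sets lie in T.
   - Census: a certificate built from these checks determines the numbers of neighbours,
     faces, point neighbours and remaining neighbours (whose B_k are finite, with >= 2 points).
   - Instances: for each twindragon an explicit invariant region, described by boxes along
     the orbit of M^-1, supplies the contraction and the bounding box; the three certificates
     are checked by evaluation and the main theorem collects the three censuses. *)

definition vec3 :: "real \<Rightarrow> real \<Rightarrow> real \<Rightarrow> real^3" where
  "vec3 x y z = vector [x, y, z]"

lemma vec3_nth [simp]: "vec3 x y z $ 1 = x" "vec3 x y z $ 2 = y" "vec3 x y z $ 3 = z"
  by (simp_all add: vec3_def)

lemma vec3_eta: "v = vec3 (v$1) (v$2) (v$3)"
  by (simp add: vec_eq_iff forall_3)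

lemma vec3_eq_iff [simp]: "vec3 x y z = vec3 x' y' z' \<longleftrightarrow> x = x' \<and> y = y' \<and> z = z'"
  by (auto simp: vec_eq_iff forall_3)

lemma vec3_add [simp]: "vec3 x y z + vec3 x' y' z' = vec3 (x + x') (y + y') (z + z')"
  and vec3_diff [simp]: "vec3 x y z - vec3 x' y' z' = vec3 (x - x') (y - y') (z - z')"
  and vec3_scale [simp]: "c *\<^sub>R vec3 x y z = vec3 (c * x) (c * y) (c * z)"
  and vec3_zero: "(0::real^3) = vec3 0 0 0"
  by (simp_all add: vec_eq_iff forall_3)

definition Mab_inverse :: "int \<Rightarrow> int \<Rightarrow> real^3^3" where
  "Mab_inverse a b =
     vector [vector [- of_int b / 2, 1, 0], vector [- of_int a / 2, 0, 1], vector [1/2, 0, 0]]"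

lemma matrix_inv_Mab: "matrix_inv (Mab a b) = Mab_inverse a b"
proof -
  have right: "Mab a b ** Mab_inverse a b = mat 1" and left: "Mab_inverse a b ** Mab a b = mat 1"
    by (simp_all add: Mab_def Mab_inverse_def vec_eq_iff forall_3 matrix_matrix_mult_def sum_3 mat_def)
  have unique: "A = Mab_inverse a b" if "Mab a b ** A = mat 1 \<and> A ** Mab a b = mat 1" for A
  proof -
    have "A = A ** (Mab a b ** Mab_inverse a b)" by (simp add: right)
    also have "\<dots> = (A ** Mab a b) ** Mab_inverse a b" by (simp add: matrix_mul_assoc)
    finally show ?thesis using that by simp
  qed
  show ?thesis
    unfolding matrix_inv_def
  proof (rule some_equality)
    show "Mab a b ** Mab_inverse a b = mat 1 \<and> Mab_inverse a b ** Mab a b = mat 1"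
      using right left by simp
  qed (rule unique)
qed

definition expand :: "int \<Rightarrow> int \<Rightarrow> real^3 \<Rightarrow> real^3" where
  "expand a b x = Mab a b *v x"

definition shrink :: "int \<Rightarrow> int \<Rightarrow> real^3 \<Rightarrow> real^3" where
  "shrink a b x = matrix_inv (Mab a b) *v x"

definition half_e1 :: "real^3" where
  "half_e1 = vec3 (1/2) 0 0"

lemma expand_vec3: "expand a b (vec3 x y z) = vec3 (2 * z) (x + of_int b * z) (y + of_int a * z)"
  by (simp add: expand_def Mab_def vec_eq_iff forall_3 matrix_vector_mult_def sum_3)

lemma shrink_vec3:
  "shrink a b (vec3 x y z) = vec3 (y - of_int b * x / 2) (z - of_int a * x / 2) (x / 2)"
  by (simp add: shrink_def matrix_inv_Mab Mab_inverse_def vec_eq_iff forall_3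
      matrix_vector_mult_def sum_3)

lemma f1_shrink: "f1 a b x = shrink a b (x - half_e1)"
  and f2_shrink: "f2 a b x = shrink a b (x + half_e1)"
proof -
  have "(1/2) *\<^sub>R e1 = half_e1"
    by (simp add: half_e1_def e1_def vec_eq_iff forall_3 axis_def)
  then show "f1 a b x = shrink a b (x - half_e1)" "f2 a b x = shrink a b (x + half_e1)"
    by (simp_all add: f1_def f2_def shrink_def)
qed

lemma shrink_expand [simp]: "shrink a b (expand a b x) = x"
  by (subst (1 2) vec3_eta[of x]) (simp add: shrink_vec3 expand_vec3 del: vec3_nth)

lemma expand_shrink [simp]: "expand a b (shrink a b x) = x"
  by (subst (1 2) vec3_eta[of x]) (simp add: shrink_vec3 expand_vec3 del: vec3_nth)

lemma linear_shrink: "linear (shrink a b)"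
  unfolding shrink_def by simp

lemma linear_expand: "linear (expand a b)"
  unfolding expand_def by simp

lemma shrink_add: "shrink a b (x + y) = shrink a b x + shrink a b y"
  and shrink_diff: "shrink a b (x - y) = shrink a b x - shrink a b y"
  and expand_add: "expand a b (x + y) = expand a b x + expand a b y"
  and expand_diff: "expand a b (x - y) = expand a b x - expand a b y"
  using linear_shrink linear_expand by (simp_all add: linear_add linear_diff)

lemma linear_shrink_pow: "linear (shrink a b ^^ n)"
proof (induction n)
  case (Suc n)
  then show ?case using linear_compose[OF Suc.IH linear_shrink] by (simp add: o_def)
qed (simp add: linear_id[unfolded id_def])

lemma linear_expand_pow: "linear (expand a b ^^ n)"
proof (induction n)
  case (Suc n)
  then show ?case using linear_compose[OF Suc.IH linear_expand] by (simp add: o_def)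
qed (simp add: linear_id[unfolded id_def])

lemma shrink_pow_expand_pow [simp]: "(shrink a b ^^ n) ((expand a b ^^ n) x) = x"
proof (induction n arbitrary: x)
  case (Suc n)
  have "(shrink a b ^^ Suc n) ((expand a b ^^ Suc n) x)
      = (shrink a b ^^ n) (shrink a b (expand a b ((expand a b ^^ n) x)))"
    by (simp only: funpow_Suc_right[of n "shrink a b"] funpow.simps(2)[of n "expand a b"] o_apply)
  then show ?case using Suc by simp
qed simp

lemma expand_pow_shrink_pow [simp]: "(expand a b ^^ n) ((shrink a b ^^ n) x) = x"
proof (induction n arbitrary: x)
  case (Suc n)
  have "(expand a b ^^ Suc n) ((shrink a b ^^ Suc n) x)
      = (expand a b ^^ n) (expand a b (shrink a b ((shrink a b ^^ n) x)))"
    by (simp only: funpow_Suc_right[of n "expand a b"] funpow.simps(2)[of n "shrink a b"] o_apply)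
  then show ?case using Suc by simp
qed simp

lemma shrink_pow_inj: "(shrink a b ^^ n) x = (shrink a b ^^ n) y \<Longrightarrow> x = y"
  by (metis expand_pow_shrink_pow)

definition l1 :: "real^3 \<Rightarrow> real" where
  "l1 x = \<bar>x$1\<bar> + \<bar>x$2\<bar> + \<bar>x$3\<bar>"

lemma l1_nonneg: "0 \<le> l1 x"
  and l1_triangle: "l1 (x + y) \<le> l1 x + l1 y"
  and l1_minus: "l1 (- x) = l1 x"
  and l1_scale: "l1 (c *\<^sub>R x) = \<bar>c\<bar> * l1 x"
  by (simp_all add: l1_def abs_triangle_ineq add_mono abs_mult algebra_simps)

lemma l1_diff_triangle: "l1 (x - y) \<le> l1 x + l1 y"
  using l1_triangle[of x "- y"] by (simp add: l1_minus)

lemma norm_le_l1: "norm x \<le> l1 x"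
  using norm_le_l1_cart[of x] by (simp add: l1_def sum_3)

lemma l1_le_norm: "l1 x \<le> 3 * norm x"
  using component_le_norm_cart[of x 1] component_le_norm_cart[of x 2]
    component_le_norm_cart[of x 3]
  by (simp add: l1_def)

lemma l1_zero_iff: "l1 x = 0 \<longleftrightarrow> x = 0"
proof
  assume "l1 x = 0"
  then show "x = 0" using norm_le_l1[of x] by simp
qed (simp add: l1_def)

lemma bounded_imp_l1_bounded: "bounded S \<Longrightarrow> \<exists>B. \<forall>x\<in>S. l1 x \<le> B"
proof -
  assume "bounded S"
  then obtain B where "\<forall>x\<in>S. norm x \<le> B" by (auto simp: bounded_iff)
  then have "\<forall>x\<in>S. l1 x \<le> 3 * B" using l1_le_norm by (meson mult_left_mono order_trans zero_le_numeral)
  then show ?thesis by blast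
qed

lemma l1_shrink: "l1 (shrink a b x) \<le> (1 + \<bar>of_int a\<bar> + \<bar>of_int b\<bar>) * l1 x"
proof -
  obtain u v w where x: "x = vec3 u v w" by (metis vec3_eta)
  have 1: "\<bar>v - of_int b * u / 2\<bar> \<le> \<bar>v\<bar> + \<bar>of_int b\<bar> * \<bar>u\<bar>"
    and 2: "\<bar>w - of_int a * u / 2\<bar> \<le> \<bar>w\<bar> + \<bar>of_int a\<bar> * \<bar>u\<bar>"
    by (auto simp: abs_mult intro!: order_trans[OF abs_triangle_ineq4])
  have "l1 (shrink a b x) = \<bar>v - of_int b * u / 2\<bar> + \<bar>w - of_int a * u / 2\<bar> + \<bar>u\<bar> / 2"
    unfolding x by (simp add: shrink_vec3 l1_def)
  also have "\<dots> \<le> (1 + \<bar>of_int a\<bar> + \<bar>of_int b\<bar>) * l1 x"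
    using 1 2 unfolding x
    by (simp add: l1_def algebra_simps)
      (insert mult_nonneg_nonneg[OF abs_ge_zero[of v] abs_ge_zero[of "of_int a"]]
         mult_nonneg_nonneg[OF abs_ge_zero[of v] abs_ge_zero[of "of_int b"]]
         mult_nonneg_nonneg[OF abs_ge_zero[of w] abs_ge_zero[of "of_int a"]]
         mult_nonneg_nonneg[OF abs_ge_zero[of w] abs_ge_zero[of "of_int b"]], linarith)
  finally show ?thesis .
qed

section \<open>The twindragon as the set of bounded digit orbits\<close>

definition hutchinson :: "int \<Rightarrow> int \<Rightarrow> (real^3) set \<Rightarrow> (real^3) set" where
  "hutchinson a b S = f1 a b ` S \<union> f2 a b ` S"

text \<open>A digit step from x to y: x is f1 y or f2 y, equivalently y = M x \<plusminus> e1/2.\<close>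

definition digit_step :: "int \<Rightarrow> int \<Rightarrow> real^3 \<Rightarrow> real^3 \<Rightarrow> bool" where
  "digit_step a b x y \<longleftrightarrow> y = expand a b x + half_e1 \<or> y = expand a b x - half_e1"

definition bounded_orbits :: "int \<Rightarrow> int \<Rightarrow> (real^3) set" where
  "bounded_orbits a b =
     {x. \<exists>y B. y 0 = x \<and> (\<forall>j. digit_step a b (y j) (y (Suc j))) \<and> (\<forall>j. l1 (y j) \<le> B)}"

lemma digit_step_f1: "digit_step a b (f1 a b z) z"
  and digit_step_f2: "digit_step a b (f2 a b z) z"
  by (simp_all add: digit_step_def f1_shrink f2_shrink expand_diff expand_add)

lemma digit_step_cases: "digit_step a b x y \<Longrightarrow> x = f1 a b y \<or> x = f2 a b y"
  unfolding digit_step_def f1_shrink f2_shrink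
  by (metis shrink_expand add_diff_cancel diff_add_cancel)

lemma hutchinson_digit_step: "x \<in> hutchinson a b S \<Longrightarrow> \<exists>y\<in>S. digit_step a b x y"
  unfolding hutchinson_def using digit_step_f1 digit_step_f2 by blast

lemma hutchinson_mono: "S \<subseteq> S' \<Longrightarrow> hutchinson a b S \<subseteq> hutchinson a b S'"
  by (auto simp: hutchinson_def)

lemma continuous_f1: "continuous_on S (f1 a b)"
  and continuous_f2: "continuous_on S (f2 a b)"
proof -
  have L: "continuous_on S (shrink a b)" for S
    using linear_shrink by (simp add: linear_continuous_on linear_conv_bounded_linear)
  have "f1 a b = shrink a b \<circ> (\<lambda>x. x - half_e1)" "f2 a b = shrink a b \<circ> (\<lambda>x. x + half_e1)"
    by (auto simp: f1_shrink f2_shrink)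
  then show "continuous_on S (f1 a b)" "continuous_on S (f2 a b)"
    by (simp_all only:) (intro continuous_on_compose continuous_intros L)+
qed

lemma compact_hutchinson: "compact S \<Longrightarrow> compact (hutchinson a b S)"
  unfolding hutchinson_def
  by (intro compact_Un compact_continuous_image continuous_f1 continuous_f2)

locale contractive_pair =
  fixes a b :: int and p :: nat and P :: "(real^3) set"
  assumes p_pos: "0 < p"
    and halving: "\<And>x. l1 ((shrink a b ^^ p) x) \<le> l1 x / 2"
    and P_compact: "compact P" and P_nonempty: "P \<noteq> {}"
    and P_invariant: "hutchinson a b P \<subseteq> P"
begin

abbreviation "L \<equiv> shrink a b"
abbreviation "M \<equiv> expand a b"

text \<open>The adapted norm sums l1 over p consecutive images; M^{-1} contracts it by the factor
  decay_rate < 1, which gives the uniform estimate l1 (L^n x) \<le> decay_const * decay_rate^n * l1 x.\<close>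

definition "growth = (1 + \<bar>of_int a\<bar> + \<bar>of_int b\<bar> :: real)"
definition "decay_const = (\<Sum>j<p. growth ^ j)"
definition "adapted_norm x = (\<Sum>j<p. l1 ((L ^^ j) x))"
definition "decay_rate = 1 - 1 / (2 * decay_const)"

lemma growth_ge_1: "1 \<le> growth"
  by (simp add: growth_def)

lemma decay_const_ge_1: "1 \<le> decay_const"
proof -
  have "decay_const = growth ^ 0 + (\<Sum>j\<in>{..<p}-{0}. growth ^ j)"
    unfolding decay_const_def using p_pos by (subst sum.remove[of _ 0]) auto
  moreover have "0 \<le> (\<Sum>j\<in>{..<p}-{0}. growth ^ j)"
    using growth_ge_1 by (intro sum_nonneg) simp
  ultimately show ?thesis by simp
qed

lemma decay_rate_bounds: "0 \<le> decay_rate" "decay_rate < 1"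
  using decay_const_ge_1 by (auto simp: decay_rate_def field_simps)

lemma l1_shrink_pow: "l1 ((L ^^ j) x) \<le> growth ^ j * l1 x"
proof (induction j)
  case (Suc j)
  have "l1 ((L ^^ Suc j) x) \<le> growth * l1 ((L ^^ j) x)"
    using l1_shrink unfolding growth_def by simp
  also have "\<dots> \<le> growth * (growth ^ j * l1 x)"
    using Suc growth_ge_1 by (intro mult_left_mono) auto
  finally show ?case by simp
qed simp

lemma adapted_norm_le: "adapted_norm x \<le> decay_const * l1 x"
proof -
  have "adapted_norm x \<le> (\<Sum>j<p. growth ^ j * l1 x)"
    unfolding adapted_norm_def by (intro sum_mono l1_shrink_pow)
  also have "\<dots> = decay_const * l1 x"
    unfolding decay_const_def by (simp add: sum_distrib_right)
  finally show ?thesis .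
qed

lemma l1_le_adapted_norm: "l1 x \<le> adapted_norm x"
proof -
  have "adapted_norm x = l1 ((L ^^ 0) x) + (\<Sum>j\<in>{..<p}-{0}. l1 ((L ^^ j) x))"
    unfolding adapted_norm_def using p_pos by (subst sum.remove[of _ 0]) auto
  moreover have "0 \<le> (\<Sum>j\<in>{..<p}-{0}. l1 ((L ^^ j) x))"
    by (intro sum_nonneg) (simp add: l1_nonneg)
  ultimately show ?thesis by simp
qed

lemma adapted_norm_shrink: "adapted_norm (L x) \<le> decay_rate * adapted_norm x"
proof -
  have "adapted_norm (L x) = (\<Sum>j<Suc p. l1 ((L ^^ j) x)) - l1 x"
    unfolding adapted_norm_def by (subst sum.lessThan_Suc_shift) (simp add: funpow_swap1)
  also have "\<dots> = adapted_norm x + l1 ((L ^^ p) x) - l1 x"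
    unfolding adapted_norm_def by simp
  also have "\<dots> \<le> adapted_norm x - l1 x / 2"
    using halving[of x] by simp
  also have "\<dots> \<le> adapted_norm x - adapted_norm x / (2 * decay_const)"
    using adapted_norm_le[of x] decay_const_ge_1 by (simp add: divide_le_eq mult.commute)
  also have "\<dots> = decay_rate * adapted_norm x"
    by (simp add: decay_rate_def algebra_simps)
  finally show ?thesis .
qed

lemma l1_shrink_pow_decay: "l1 ((L ^^ n) x) \<le> decay_const * decay_rate ^ n * l1 x"
proof -
  have "adapted_norm ((L ^^ n) x) \<le> decay_rate ^ n * adapted_norm x"
  proof (induction n)
    case (Suc n)
    have "adapted_norm ((L ^^ Suc n) x) \<le> decay_rate * adapted_norm ((L ^^ n) x)"
      using adapted_norm_shrink by simp
    also have "\<dots> \<le> decay_rate * (decay_rate ^ n * adapted_norm x)"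
      using Suc decay_rate_bounds by (intro mult_left_mono) auto
    finally show ?case by simp
  qed simp
  then have "l1 ((L ^^ n) x) \<le> decay_rate ^ n * adapted_norm x"
    using l1_le_adapted_norm order_trans by blast
  also have "\<dots> \<le> decay_rate ^ n * (decay_const * l1 x)"
    using adapted_norm_le decay_rate_bounds by (intro mult_left_mono) auto
  finally show ?thesis by (simp add: algebra_simps)
qed

lemma decay_eventually_small:
  assumes "0 \<le> B" "0 < e" shows "\<exists>n. decay_const * decay_rate ^ n * B < e"
proof (cases "B = 0")
  case False
  then have "0 < e / (decay_const * B)" using assms decay_const_ge_1 by auto
  then obtain n where "decay_rate ^ n < e / (decay_const * B)"
    using real_arch_pow_inv decay_rate_bounds by blast
  then have "decay_rate ^ n * (decay_const * B) < e"
    using False assms decay_const_ge_1 by (simp add: pos_less_divide_eq)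
  then show ?thesis by (auto simp: algebra_simps)
qed (use assms in auto)

lemma expand_bounded_imp_zero:
  assumes "\<And>n. l1 ((M ^^ n) v) \<le> B" shows "v = 0"
proof (rule ccontr)
  assume "v \<noteq> 0"
  then have pos: "0 < l1 v" using l1_zero_iff l1_nonneg by (metis less_eq_real_def)
  have "0 \<le> B" using assms[of 0] l1_nonneg[of v] by simp
  then obtain n where n: "decay_const * decay_rate ^ n * B < l1 v"
    using decay_eventually_small pos by blast
  have "l1 v = l1 ((L ^^ n) ((M ^^ n) v))" by simp
  also have "\<dots> \<le> decay_const * decay_rate ^ n * l1 ((M ^^ n) v)" by (rule l1_shrink_pow_decay)
  also have "\<dots> \<le> decay_const * decay_rate ^ n * B"
    using assms[of n] decay_const_ge_1 decay_rate_bounds by (intro mult_left_mono) auto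
  finally show False using n by simp
qed

lemma chain_pullback:
  assumes K: "hutchinson a b K \<subseteq> K" "k0 \<in> K"
    and chain: "\<forall>j. digit_step a b (y j) (y (Suc j))"
  shows "\<exists>w\<in>K. y 0 - w = (L ^^ n) (y n - k0)"
  using chain
proof (induction n arbitrary: y)
  case 0 then show ?case using K by auto
next
  case (Suc n)
  from Suc.prems have "\<forall>j. digit_step a b (y (Suc j)) (y (Suc (Suc j)))" by simp
  from Suc.IH[OF this] obtain w where w: "w \<in> K" "y 1 - w = (L ^^ n) (y (Suc n) - k0)"
    by auto
  from Suc.prems have "y 0 = f1 a b (y 1) \<or> y 0 = f2 a b (y 1)"
    using digit_step_cases by simp
  then obtain w' where w': "w' \<in> K" "y 0 - w' = L (y 1 - w)"
  proof (elim disjE)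
    assume "y 0 = f1 a b (y 1)"
    moreover have "f1 a b w \<in> K" using K w by (auto simp: hutchinson_def)
    ultimately show thesis using that[of "f1 a b w"] by (simp add: f1_shrink shrink_diff)
  next
    assume "y 0 = f2 a b (y 1)"
    moreover have "f2 a b w \<in> K" using K w by (auto simp: hutchinson_def)
    ultimately show thesis using that[of "f2 a b w"] by (simp add: f2_shrink shrink_add shrink_diff)
  qed
  then show ?case using w by (metis funpow.simps(2) o_apply)
qed

lemma bounded_orbits_subset:
  assumes "closed K" "K \<noteq> {}" "hutchinson a b K \<subseteq> K" shows "bounded_orbits a b \<subseteq> K"
proof
  fix x assume "x \<in> bounded_orbits a b"
  then obtain y B where y: "y 0 = x" "\<forall>j. digit_step a b (y j) (y (Suc j))" "\<forall>j. l1 (y j) \<le> B"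
    unfolding bounded_orbits_def by blast
  obtain k0 where k0: "k0 \<in> K" using assms by auto
  have "x \<in> closure K"
    unfolding closure_approachable
  proof (intro allI impI)
    fix e :: real assume e: "0 < e"
    have "0 \<le> B" using y(3) l1_nonneg[of "y 0"] by (metis order_trans)
    then have "0 \<le> B + l1 k0" using l1_nonneg[of k0] by simp
    then obtain n where n: "decay_const * decay_rate ^ n * (B + l1 k0) < e"
      using decay_eventually_small e by blast
    obtain w where w: "w \<in> K" "y 0 - w = (L ^^ n) (y n - k0)"
      using chain_pullback[OF assms(3) k0 y(2)] by blast
    have "dist w x \<le> l1 (y 0 - w)"
      using y(1) norm_le_l1[of "x - w"] by (simp add: dist_norm norm_minus_commute)
    also have "\<dots> \<le> decay_const * decay_rate ^ n * l1 (y n - k0)"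
      unfolding w(2) by (rule l1_shrink_pow_decay)
    also have "\<dots> \<le> decay_const * decay_rate ^ n * (B + l1 k0)"
      using l1_diff_triangle[of "y n" k0] y(3) decay_const_ge_1 decay_rate_bounds
      by (intro mult_left_mono) (auto intro: order_trans)
    finally show "\<exists>w\<in>K. dist w x < e" using w(1) n by force
  qed
  then show "x \<in> K" using assms(1) by simp
qed

lemma self_expanding_subset_orbits:
  assumes "\<forall>x\<in>X. l1 x \<le> B" "\<forall>x\<in>X. \<exists>y\<in>X. digit_step a b x y"
  shows "X \<subseteq> bounded_orbits a b"
proof
  fix x assume x: "x \<in> X"
  define y where "y = rec_nat x (\<lambda>_ z. SOME z'. z' \<in> X \<and> digit_step a b z z')"
  have y_0: "y 0 = x" by (simp add: y_def)
  have y_Suc: "y (Suc j) = (SOME z'. z' \<in> X \<and> digit_step a b (y j) z')" for j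
    by (simp add: y_def)
  have yX: "y j \<in> X" for j
  proof (induction j)
    case (Suc j) then show ?case unfolding y_Suc using assms(2) by (metis (no_types, lifting) someI_ex)
  qed (simp add: x y_0)
  have "digit_step a b (y j) (y (Suc j))" for j
    unfolding y_Suc using assms(2) yX[of j] by (metis (no_types, lifting) someI_ex)
  then show "x \<in> bounded_orbits a b"
    unfolding bounded_orbits_def using y_0 yX assms(1) by blast
qed

text \<open>So every nonempty compact fixed set of the Hutchinson operator is the set of bounded
  orbits; in particular there is at most one such set.\<close>

lemma fixed_set_eq_orbits:
  assumes "compact K" "K \<noteq> {}" "K = hutchinson a b K" shows "K = bounded_orbits a b"
proof
  show "bounded_orbits a b \<subseteq> K"
    using assms by (intro bounded_orbits_subset) (auto simp: compact_imp_closed)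
  obtain B where "\<forall>x\<in>K. l1 x \<le> B"
    using bounded_imp_l1_bounded compact_imp_bounded assms(1) by blast
  then show "K \<subseteq> bounded_orbits a b"
    using assms(3) hutchinson_digit_step by (intro self_expanding_subset_orbits) auto
qed

text \<open>Existence of a fixed set: the intersection of the decreasing iterates of P.\<close>

definition "iterate n = (hutchinson a b ^^ n) P"

lemma iterate_props: "compact (iterate n)" "iterate n \<noteq> {}" "iterate (Suc n) \<subseteq> iterate n"
proof -
  show "compact (iterate n)"
    by (induction n) (auto simp: iterate_def P_compact compact_hutchinson)
  show "iterate n \<noteq> {}"
    by (induction n) (auto simp: iterate_def P_nonempty hutchinson_def)
  show "iterate (Suc n) \<subseteq> iterate n"
  proof (induction n)
    case 0 then show ?case using P_invariant by (simp add: iterate_def)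
  next
    case (Suc n) then show ?case unfolding iterate_def by (simp add: hutchinson_mono)
  qed
qed

lemma iterate_antimono: "m \<le> n \<Longrightarrow> iterate n \<subseteq> iterate m"
  by (induction n rule: dec_induct) (use iterate_props(3) in auto)

definition "attractor = (\<Inter>n. iterate n)"

text \<open>A point of the attractor has one of its two digit preimages in infinitely many, hence
  (the iterates being nested) in all iterates.\<close>

lemma attractor_fixed: "attractor \<subseteq> hutchinson a b attractor"
proof
  fix x assume x: "x \<in> attractor"
  define z1 where "z1 = M x + half_e1"
  define z2 where "z2 = M x - half_e1"
  have x1: "x = f1 a b z1" and x2: "x = f2 a b z2"
    by (simp_all add: z1_def z2_def f1_shrink f2_shrink)
  have "z1 \<in> iterate n \<or> z2 \<in> iterate n" for n
  proof -
    have "x \<in> iterate (Suc n)" using x unfolding attractor_def by auto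
    then obtain z where z: "z \<in> iterate n" "x = f1 a b z \<or> x = f2 a b z"
      unfolding iterate_def hutchinson_def by auto
    then have "z = z1 \<or> z = z2"
      using x1 x2 unfolding f1_shrink f2_shrink
      by (metis expand_shrink add_diff_cancel diff_add_cancel z1_def z2_def)
    then show ?thesis using z by auto
  qed
  then have "(\<forall>n. z1 \<in> iterate n) \<or> (\<forall>n. z2 \<in> iterate n)"
    by (meson iterate_antimono nat_le_linear subsetD)
  then show "x \<in> hutchinson a b attractor"
    unfolding attractor_def hutchinson_def using x1 x2 by blast
qed

lemma attractor_props: "compact attractor" "attractor \<noteq> {}" "attractor = hutchinson a b attractor"
proof -
  have "closed attractor"
    unfolding attractor_def using iterate_props by (simp add: closed_INT compact_imp_closed)
  moreover have "attractor \<subseteq> iterate 0" unfolding attractor_def by auto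
  ultimately show "compact attractor"
    using iterate_props(1)[of 0] by (metis compact_Int_closed inf.absorb_iff2)
  show "attractor \<noteq> {}"
    unfolding attractor_def by (rule compact_nest) (use iterate_props iterate_antimono in auto)
  have "hutchinson a b attractor \<subseteq> iterate (Suc n)" for n
    unfolding attractor_def iterate_def hutchinson_def by auto
  then have "hutchinson a b attractor \<subseteq> attractor"
    using iterate_props(3) unfolding attractor_def by blast
  then show "attractor = hutchinson a b attractor"
    using attractor_fixed by blast
qed

text \<open>Consequently the defining description of the twindragon is unambiguous.\<close>

lemma twindragon_eq_orbits: "twindragon a b = bounded_orbits a b"
  unfolding twindragon_def
proof (rule the_equality)
  show "compact (bounded_orbits a b) \<and> bounded_orbits a b \<noteq> {} \<and>
      bounded_orbits a b = f1 a b ` bounded_orbits a b \<union> f2 a b ` bounded_orbits a b"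
    using attractor_props fixed_set_eq_orbits[OF attractor_props] by (simp add: hutchinson_def)
  fix T assume "compact T \<and> T \<noteq> {} \<and> T = f1 a b ` T \<union> f2 a b ` T"
  then show "T = bounded_orbits a b"
    using fixed_set_eq_orbits[of T] unfolding hutchinson_def by blast
qed

end

lemma lattice3_iff: "m \<in> lattice3 \<longleftrightarrow> (\<exists>i j l::int. m = vec3 (of_int i) (of_int j) (of_int l))"
proof
  assume "m \<in> lattice3"
  then have "m$1 \<in> \<int>" "m$2 \<in> \<int>" "m$3 \<in> \<int>" unfolding lattice3_def by auto
  then obtain i j l where "m$1 = of_int i" "m$2 = of_int j" "m$3 = of_int l" by (metis Ints_cases)
  then show "\<exists>i j l::int. m = vec3 (of_int i) (of_int j) (of_int l)" by (metis vec3_eta)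
qed (auto simp: lattice3_def forall_3)

lemma finite_lattice_ball: "finite {m \<in> lattice3. l1 m \<le> R}"
proof -
  let ?I = "{-\<lceil>R\<rceil>..\<lceil>R\<rceil>}"
  have bound: "\<bar>i\<bar> \<le> \<lceil>R\<rceil>" if "\<bar>of_int i\<bar> \<le> R" for i :: int
  proof -
    have "real_of_int \<bar>i\<bar> \<le> real_of_int \<lceil>R\<rceil>" using that le_of_int_ceiling[of R] by linarith
    then show ?thesis by (simp only: of_int_le_iff)
  qed
  have "{m \<in> lattice3. l1 m \<le> R} \<subseteq>
      (\<lambda>(i, j, l). vec3 (of_int i) (of_int j) (of_int l)) ` (?I \<times> ?I \<times> ?I)"
  proof
    fix m assume m: "m \<in> {m \<in> lattice3. l1 m \<le> R}"
    then obtain i j l :: int where e: "m = vec3 (of_int i) (of_int j) (of_int l)"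
      by (auto simp: lattice3_iff)
    have "\<bar>of_int i\<bar> \<le> R" "\<bar>of_int j\<bar> \<le> R" "\<bar>of_int l\<bar> \<le> R"
      using m unfolding e l1_def by auto
    then have "\<bar>i\<bar> \<le> \<lceil>R\<rceil>" "\<bar>j\<bar> \<le> \<lceil>R\<rceil>" "\<bar>l\<bar> \<le> \<lceil>R\<rceil>" using bound by auto
    then show "m \<in> (\<lambda>(i, j, l). vec3 (of_int i) (of_int j) (of_int l)) ` (?I \<times> ?I \<times> ?I)"
      unfolding e by (intro image_eqI[of _ _ "(i, j, l)"]) auto
  qed
  then show ?thesis by (rule finite_subset) auto
qed

lemma transl_iff: "y \<in> (\<lambda>x. x + k) ` S \<longleftrightarrow> y - k \<in> S" for y k :: "real^3"
proof
  assume "y - k \<in> S"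
  then show "y \<in> (\<lambda>x. x + k) ` S" by (rule rev_image_eqI) simp
qed auto

lemma closed_transl: "closed S \<Longrightarrow> closed ((\<lambda>x. x + k) ` S)" for k :: "real^3"
  using closed_translation[of S k] by (simp add: add.commute)

text \<open>A translate S + m of a set S with l1 bounded by B that meets the unit ball around x has
  l1 m \<le> l1 x + 3 + B; so only finitely many lattice translates of the tile come near x.\<close>

lemma translate_near_bound:
  assumes "z - m \<in> S" "\<forall>t\<in>S. l1 t \<le> B" "dist z x < 1"
  shows "l1 m \<le> l1 x + 3 + B"
proof -
  have "l1 m \<le> l1 (z - m) + l1 z" using l1_diff_triangle[of z "z - m"] by simp
  moreover have "l1 z \<le> l1 x + l1 (z - x)" using l1_triangle[of x "z - x"] by simp
  moreover have "l1 (z - x) \<le> 3" using l1_le_norm[of "z - x"] assms(3) by (simp add: dist_norm)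
  ultimately show ?thesis using assms(1,2) by fastforce
qed

section \<open>Geometry of the tile\<close>

context contractive_pair
begin

abbreviation "Tw \<equiv> twindragon a b"

lemma Tw_props: "compact Tw" "Tw \<noteq> {}" "Tw = hutchinson a b Tw"
  using attractor_props fixed_set_eq_orbits[OF attractor_props] twindragon_eq_orbits by auto

lemma Tw_closed: "closed Tw"
  using Tw_props compact_imp_closed by blast

lemma Tw_l1_bounded: "\<exists>B. \<forall>x\<in>Tw. l1 x \<le> B"
  using Tw_props(1) bounded_imp_l1_bounded compact_imp_bounded by blast

lemma Tw_step: "x \<in> Tw \<Longrightarrow> M x + half_e1 \<in> Tw \<or> M x - half_e1 \<in> Tw"
  using hutchinson_digit_step[of x a b Tw] Tw_props(3) unfolding digit_step_def by auto

lemma self_expanding_subset_Tw: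
  assumes "\<forall>x\<in>X. l1 x \<le> B" "\<forall>x\<in>X. M x + half_e1 \<in> X \<or> M x - half_e1 \<in> X"
  shows "X \<subseteq> Tw"
  unfolding twindragon_eq_orbits
  by (rule self_expanding_subset_orbits[OF assms(1)]) (use assms(2) in \<open>auto simp: digit_step_def\<close>)

lemma Tw_subset_P: "Tw \<subseteq> P"
  unfolding twindragon_eq_orbits
  by (rule bounded_orbits_subset) (use P_compact P_nonempty P_invariant compact_imp_closed in auto)

lemma Bset_iff: "y \<in> Bset Tw k \<longleftrightarrow> y \<in> Tw \<and> y - k \<in> Tw"
  unfolding Bset_def by (simp add: transl_iff)

lemma neighbor_step:
  assumes "y \<in> Bset Tw k"
  shows "\<exists>s s'. (s = half_e1 \<or> s = - half_e1) \<and> (s' = half_e1 \<or> s' = - half_e1) \<and>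
           M y + s \<in> Bset Tw (M k + s - s')"
proof -
  from assms have y: "y \<in> Tw" "y - k \<in> Tw" by (auto simp: Bset_iff)
  obtain s where s: "s = half_e1 \<or> s = - half_e1" "M y + s \<in> Tw"
    using Tw_step[OF y(1)] by (metis diff_conv_add_uminus)
  obtain s' where s': "s' = half_e1 \<or> s' = - half_e1" "M (y - k) + s' \<in> Tw"
    using Tw_step[OF y(2)] by (metis diff_conv_add_uminus)
  have "M y + s - (M k + s - s') = M (y - k) + s'"
    by (simp add: expand_diff)
  then have "M y + s \<in> Bset Tw (M k + s - s')"
    using s(2) s'(2) by (simp only: Bset_iff)
  then show ?thesis using s(1) s'(1) by blast
qed

text \<open>T is not a single point, since f1 and f2 have different fixed points.\<close>

lemma Tw_two_points: "\<exists>t1\<in>Tw. \<exists>t2\<in>Tw. t1 \<noteq> t2"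
proof (rule ccontr)
  assume "\<not> ?thesis"
  then obtain x where "Tw = {x}" using Tw_props(2) by blast
  then have "f1 a b x = x" "f2 a b x = x" using Tw_props(3) by (auto simp: hutchinson_def)
  then have "L (x - half_e1) = L (x + half_e1)" by (simp add: f1_shrink f2_shrink)
  then have "x - half_e1 = x + half_e1" by (metis expand_shrink)
  then show False by (simp add: half_e1_def vec3_zero[symmetric] vec_eq_iff forall_3)
qed

text \<open>The tile has no isolated points: pulling two distinct points of the tile back along the
  digit chain of x gives two distinct points of the tile arbitrarily close to x.\<close>

lemma Tw_perfect:
  assumes "x \<in> Tw" "0 < e" shows "\<exists>z\<in>Tw. z \<noteq> x \<and> dist z x < e"
proof -
  obtain t1 t2 where t: "t1 \<in> Tw" "t2 \<in> Tw" "t1 \<noteq> t2" using Tw_two_points by blast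
  from assms(1) obtain y B where y: "y 0 = x" "\<forall>j. digit_step a b (y j) (y (Suc j))" "\<forall>j. l1 (y j) \<le> B"
    unfolding twindragon_eq_orbits bounded_orbits_def by blast
  have "0 \<le> B" using y(3) l1_nonneg[of "y 0"] by (metis order_trans)
  then have "0 \<le> B + l1 t1 + l1 t2" using l1_nonneg[of t1] l1_nonneg[of t2] by simp
  then obtain n where n: "decay_const * decay_rate ^ n * (B + l1 t1 + l1 t2) < e"
    using decay_eventually_small[OF _ assms(2)] by blast
  have close: "dist w x < e" if w: "x - w = (L ^^ n) (y n - t)" "t \<in> {t1, t2}" for w t
  proof -
    have "dist w x \<le> l1 (x - w)" using norm_le_l1[of "x - w"] by (simp add: dist_norm norm_minus_commute)
    also have "\<dots> \<le> decay_const * decay_rate ^ n * l1 (y n - t)" unfolding w(1) by (rule l1_shrink_pow_decay)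
    also have "\<dots> \<le> decay_const * decay_rate ^ n * (B + l1 t1 + l1 t2)"
    proof (intro mult_left_mono)
      have "l1 t \<le> l1 t1 + l1 t2" using w(2) l1_nonneg[of t1] l1_nonneg[of t2] by auto
      then show "l1 (y n - t) \<le> B + l1 t1 + l1 t2"
        using l1_diff_triangle[of "y n" t] y(3)[rule_format, of n] by linarith
    qed (use decay_const_ge_1 decay_rate_bounds in auto)
    finally show ?thesis using n by simp
  qed
  have inv: "hutchinson a b Tw \<subseteq> Tw" using Tw_props(3) by simp
  obtain w1 where w1: "w1 \<in> Tw" "y 0 - w1 = (L ^^ n) (y n - t1)"
    using chain_pullback[OF inv t(1) y(2)] by blast
  obtain w2 where w2: "w2 \<in> Tw" "y 0 - w2 = (L ^^ n) (y n - t2)"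
    using chain_pullback[OF inv t(2) y(2)] by blast
  have "w1 \<noteq> w2"
  proof
    assume "w1 = w2"
    then have "(L ^^ n) (y n - t1) = (L ^^ n) (y n - t2)" using w1 w2 by simp
    then have "y n - t1 = y n - t2" by (rule shrink_pow_inj)
    then show False using t by simp
  qed
  then have "w1 \<noteq> x \<or> w2 \<noteq> x" by auto
  then show ?thesis using close[of w1 t1] close[of w2 t2] w1 w2 y(1) by auto
qed

text \<open>If along every path of the neighbour graph starting in a set S of neighbours two points
  of B_k are moved by the same digits into the same B_k', then B_k contains at most one point:
  otherwise the expansions M^n (y - y') would stay bounded.\<close>

lemma forced_path_unique:
  assumes S: "\<And>k y y'. k \<in> S \<Longrightarrow> y \<in> Bset Tw k \<Longrightarrow> y' \<in> Bset Tw k \<Longrightarrow>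
      \<exists>k'\<in>S. \<exists>s. M y + s \<in> Bset Tw k' \<and> M y' + s \<in> Bset Tw k'"
    and k: "k \<in> S" and y: "y \<in> Bset Tw k" "y' \<in> Bset Tw k"
  shows "y = y'"
proof -
  obtain B where B: "\<forall>x\<in>Tw. l1 x \<le> B" using Tw_l1_bounded by blast
  have path: "\<exists>k'\<in>S. \<exists>c. (M ^^ n) y + c \<in> Bset Tw k' \<and> (M ^^ n) y' + c \<in> Bset Tw k'" for n
  proof (induction n)
    case 0 then show ?case using k y by (intro bexI[of _ k] exI[of _ 0]) auto
  next
    case (Suc n)
    then obtain k' c where kc: "k' \<in> S" "(M ^^ n) y + c \<in> Bset Tw k'" "(M ^^ n) y' + c \<in> Bset Tw k'"
      by blast
    from S[OF kc] obtain k'' s where "k'' \<in> S" "M ((M ^^ n) y + c) + s \<in> Bset Tw k''"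
      "M ((M ^^ n) y' + c) + s \<in> Bset Tw k''" by blast
    then show ?case by (intro bexI[of _ k''] exI[of _ "M c + s"]) (auto simp: expand_add add.assoc)
  qed
  have "l1 ((M ^^ n) (y - y')) \<le> 2 * B" for n
  proof -
    obtain c where c: "(M ^^ n) y + c \<in> Tw" "(M ^^ n) y' + c \<in> Tw"
      using path[of n] by (auto simp: Bset_iff)
    have "(M ^^ n) (y - y') = ((M ^^ n) y + c) - ((M ^^ n) y' + c)"
      using linear_diff[OF linear_expand_pow] by simp
    moreover have "l1 ((M ^^ n) y + c) \<le> B" "l1 ((M ^^ n) y' + c) \<le> B" using c B by auto
    ultimately show ?thesis
      using l1_diff_triangle[of "(M ^^ n) y + c" "(M ^^ n) y' + c"] by simp
  qed
  then show "y = y'" using expand_bounded_imp_zero by fastforce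
qed

text \<open>The translates of the tile by lattice vectors cover R^3.  The union Y of these
  translates is closed and satisfies L (Y + e1/2) \<subseteq> Y, since M maps the lattice onto the
  lattice translated by \<plusminus>e1/2 in the first coordinate; hence Y is dense, being within
  decay_const * decay_rate^n * 3 of every point.\<close>

definition "lattice_cover = {x. \<exists>m\<in>lattice3. x - m \<in> Tw}"

text \<open>The union of all lattice translates is closed: near a point only finitely many
  translates matter.\<close>

lemma lattice_cover_closed: "closed lattice_cover"
  unfolding closed_limpt
proof (intro allI impI)
  fix x assume limpt: "x islimpt lattice_cover"
  obtain B where B: "\<forall>x\<in>Tw. l1 x \<le> B" using Tw_l1_bounded by blast
  let ?Z = "\<Union>m\<in>{m \<in> lattice3. l1 m \<le> l1 x + 3 + B}. (\<lambda>t. t + m) ` Tw"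
  have "closed ?Z"
    by (intro closed_UN finite_lattice_ball ballI closed_transl Tw_closed)
  moreover have "x islimpt ?Z" unfolding islimpt_approachable
  proof (intro allI impI)
    fix e :: real assume e: "0 < e"
    obtain z where z: "z \<in> lattice_cover" "z \<noteq> x" "dist z x < min e 1"
      using limpt e unfolding islimpt_approachable by (meson less_numeral_extra(1) min_less_iff_conj)
    from z(1) obtain m where m: "m \<in> lattice3" "z - m \<in> Tw" unfolding lattice_cover_def by auto
    then have "l1 m \<le> l1 x + 3 + B" using B z(3) by (intro translate_near_bound) auto
    then have "z \<in> ?Z" using m by (auto simp: transl_iff)
    then show "\<exists>z\<in>?Z. z \<noteq> x \<and> dist z x < e" using z by auto
  qed
  ultimately have "x \<in> ?Z" using closed_limpt by blast
  then show "x \<in> lattice_cover" unfolding lattice_cover_def by (auto simp: transl_iff)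
qed

text \<open>Every lattice vector m satisfies m + e1/2 = M m' \<plusminus> e1/2 for a lattice vector m'
  (split the first coordinate of m by parity).\<close>

lemma lattice_digit_decomposition:
  assumes "m \<in> lattice3"
  shows "\<exists>m'\<in>lattice3. m + half_e1 = M m' + half_e1 \<or> m + half_e1 = M m' - half_e1"
proof -
  obtain i j l :: int where e: "m = vec3 (of_int i) (of_int j) (of_int l)"
    using assms by (auto simp: lattice3_iff)
  obtain q where q: "i = 2 * q \<or> i = 2 * q - 1"
  proof (cases "even i")
    case True then show thesis using that by (auto elim!: evenE)
  next
    case False
    then obtain q0 where "i = 2 * q0 + 1" by (rule oddE)
    then show thesis using that[of "q0 + 1"] by simp
  qed
  let ?m = "vec3 (of_int (j - b * q)) (of_int (l - a * q)) (of_int q)"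
  have "?m \<in> lattice3" unfolding lattice3_iff by blast
  moreover have "m + half_e1 = M ?m + half_e1 \<or> m + half_e1 = M ?m - half_e1"
    using q unfolding e by (auto simp: expand_vec3 half_e1_def)
  ultimately show ?thesis by blast
qed

lemma lattice_cover_digit:
  assumes "y \<in> lattice_cover" shows "L (y + half_e1) \<in> lattice_cover"
proof -
  from assms obtain m where m: "m \<in> lattice3" "y - m \<in> Tw" unfolding lattice_cover_def by auto
  obtain m' where m': "m' \<in> lattice3" "m + half_e1 = M m' + half_e1 \<or> m + half_e1 = M m' - half_e1"
    using lattice_digit_decomposition[OF m(1)] by blast
  have "f1 a b (y - m) \<in> Tw" "f2 a b (y - m) \<in> Tw"
    using m(2) Tw_props(3) by (auto simp: hutchinson_def)
  moreover have "L (y + half_e1) - m' = f2 a b (y - m) \<or> L (y + half_e1) - m' = f1 a b (y - m)"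
    using m'(2)
  proof (elim disjE)
    assume "m + half_e1 = M m' + half_e1"
    then have "y - m + half_e1 = (y + half_e1) - M m'" by (simp add: algebra_simps)
    then have "f2 a b (y - m) = L (y + half_e1) - m'"
      unfolding f2_shrink by (simp only: shrink_diff shrink_expand)
    then show ?thesis by simp
  next
    assume "m + half_e1 = M m' - half_e1"
    then have "y - m - half_e1 = (y + half_e1) - M m'" by (simp add: algebra_simps)
    then have "f1 a b (y - m) = L (y + half_e1) - m'"
      unfolding f1_shrink by (simp only: shrink_diff shrink_expand)
    then show ?thesis by simp
  qed
  ultimately show ?thesis unfolding lattice_cover_def using m'(1) by (metis (mono_tags, lifting) mem_Collect_eq)
qed

lemma lattice_cover_near: "\<exists>q\<in>lattice_cover. l1 (q - x) \<le> 3"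
proof -
  obtain t0 where t0: "t0 \<in> Tw" using Tw_props by auto
  obtain d1 d2 d3 where d: "x - t0 = vec3 d1 d2 d3" by (metis vec3_eta)
  define m where "m = vec3 (of_int \<lfloor>d1\<rfloor>) (of_int \<lfloor>d2\<rfloor>) (of_int \<lfloor>d3\<rfloor>)"
  have "m \<in> lattice3" unfolding m_def lattice3_iff by blast
  then have "t0 + m \<in> lattice_cover" unfolding lattice_cover_def using t0 by force
  moreover have "l1 (t0 + m - x) \<le> 3"
  proof -
    have e: "t0 + m - x = vec3 (of_int \<lfloor>d1\<rfloor> - d1) (of_int \<lfloor>d2\<rfloor> - d2) (of_int \<lfloor>d3\<rfloor> - d3)"
      using d by (simp add: m_def algebra_simps)
    have f: "\<bar>of_int \<lfloor>r\<rfloor> - r\<bar> \<le> 1" for r :: real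
      using of_int_floor_le[of r] real_of_int_floor_gt_diff_one[of r] by linarith
    show ?thesis unfolding e l1_def using f[of d1] f[of d2] f[of d3] by simp
  qed
  ultimately show ?thesis by blast
qed

lemma lattice_cover_fine: "\<exists>q\<in>lattice_cover. \<exists>v. l1 v \<le> 3 \<and> q - x = (L ^^ n) v"
proof (induction n arbitrary: x)
  case 0 then show ?case using lattice_cover_near[of x] by auto
next
  case (Suc n)
  obtain q v where q: "q \<in> lattice_cover" "l1 v \<le> 3" "q - (M x - half_e1) = (L ^^ n) v"
    using Suc by blast
  have "L (q + half_e1) - x = L (q - (M x - half_e1))"
    by (simp add: shrink_diff shrink_add algebra_simps)
  also have "\<dots> = (L ^^ Suc n) v" using q(3) by simp
  finally show ?case using lattice_cover_digit[OF q(1)] q(2) by blast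
qed

theorem lattice_tiling_cover: "\<exists>m\<in>lattice3. x - m \<in> Tw"
proof -
  have "x \<in> closure lattice_cover" unfolding closure_approachable
  proof (intro allI impI)
    fix e :: real assume e: "0 < e"
    obtain n where n: "decay_const * decay_rate ^ n * 3 < e" using decay_eventually_small[of 3 e] e by auto
    obtain q v where q: "q \<in> lattice_cover" "l1 v \<le> 3" "q - x = (L ^^ n) v"
      using lattice_cover_fine by blast
    have "dist q x \<le> l1 (q - x)" using norm_le_l1[of "q - x"] by (simp add: dist_norm)
    also have "\<dots> \<le> decay_const * decay_rate ^ n * l1 v" unfolding q(3) by (rule l1_shrink_pow_decay)
    also have "\<dots> \<le> decay_const * decay_rate ^ n * 3" using q(2) decay_const_ge_1 decay_rate_bounds by (intro mult_left_mono) auto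
    finally show "\<exists>q\<in>lattice_cover. dist q x < e" using q(1) n by force
  qed
  then show ?thesis using lattice_cover_closed unfolding lattice_cover_def by simp
qed

text \<open>If x \<in> B_k lies in no translate T + m other than T and T + k, then
  near x the space is covered by T \<union> (T + k) (by the tiling and local finiteness), and every
  boundary point of T near x is a limit of points of T + k, hence lies in B_k.\<close>

lemma covered_near_point:
  assumes "\<forall>m\<in>lattice3. m \<noteq> 0 \<longrightarrow> m \<noteq> k \<longrightarrow> x - m \<notin> Tw"
  shows "\<exists>U. open U \<and> x \<in> U \<and> U \<subseteq> Tw \<union> (\<lambda>y. y + k) ` Tw"
proof -
  obtain B where B: "\<forall>x\<in>Tw. l1 x \<le> B" using Tw_l1_bounded by blast
  define Z where "Z = (\<Union>m\<in>{m \<in> lattice3. l1 m \<le> l1 x + 3 + B \<and> m \<noteq> 0 \<and> m \<noteq> k}. (\<lambda>t. t + m) ` Tw)"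
  have "closed Z" unfolding Z_def
    by (intro closed_UN ballI closed_transl Tw_closed
        finite_subset[OF _ finite_lattice_ball[of "l1 x + 3 + B"]]) auto
  moreover have "x \<notin> Z" using assms by (auto simp: Z_def transl_iff)
  moreover have "ball x 1 - Z \<subseteq> Tw \<union> (\<lambda>y. y + k) ` Tw"
  proof
    fix z assume z: "z \<in> ball x 1 - Z"
    obtain m where m: "m \<in> lattice3" "z - m \<in> Tw" using lattice_tiling_cover by blast
    have "l1 m \<le> l1 x + 3 + B" using z m B by (intro translate_near_bound) (auto simp: dist_commute)
    then have "m = 0 \<or> m = k" using z m by (auto simp: Z_def transl_iff)
    then show "z \<in> Tw \<union> (\<lambda>y. y + k) ` Tw" using m by (auto simp: transl_iff)
  qed
  ultimately show ?thesis by (intro exI[of _ "ball x 1 - Z"]) (auto simp: open_Diff)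
qed

lemma face_criterion:
  assumes k: "k \<noteq> 0" and x: "x \<in> Bset Tw k"
    and alone: "\<forall>m\<in>lattice3. m \<noteq> 0 \<longrightarrow> m \<noteq> k \<longrightarrow> x - m \<notin> Tw"
  shows "is_face Tw k"
proof -
  obtain U where U: "open U" "x \<in> U" "U \<subseteq> Tw \<union> (\<lambda>y. y + k) ` Tw"
    using covered_near_point[OF alone] by blast
  have "U \<inter> frontier Tw \<subseteq> Bset Tw k"
  proof
    fix z assume z: "z \<in> U \<inter> frontier Tw"
    then have "z \<in> Tw" using Tw_closed frontier_subset_closed by auto
    have "z \<in> closure (- Tw)" using z unfolding frontier_def by (simp add: closure_complement)
    then have "z \<in> closure (U \<inter> - Tw)" using open_Int_closure_subset[OF U(1)] z by blast
    moreover have "U \<inter> - Tw \<subseteq> (\<lambda>y. y + k) ` Tw" using U(3) by auto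
    ultimately have "z \<in> closure ((\<lambda>y. y + k) ` Tw)" using closure_mono by blast
    then have "z \<in> (\<lambda>y. y + k) ` Tw" using closure_closed[OF closed_transl[OF Tw_closed]] by simp
    then show "z \<in> Bset Tw k" using \<open>z \<in> Tw\<close> by (simp add: Bset_def)
  qed
  then show ?thesis unfolding is_face_def using k x U by blast
qed

text \<open>A finite intersection is never a face: in a small punctured ball around x the boundary
  of T is empty, so by connectedness the punctured ball lies inside T or outside T; the first
  contradicts perfectness of T + k (its points near x would lie in B_k), the second perfectness
  of T.\<close>

lemma finite_not_face:
  assumes fin: "finite (Bset Tw k)" shows "\<not> is_face Tw k"
proof
  assume "is_face Tw k"
  then obtain x U where x: "x \<in> Bset Tw k" and U: "open U" "x \<in> U" "U \<inter> frontier Tw \<subseteq> Bset Tw k"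
    unfolding is_face_def by blast
  obtain e1 where e1: "0 < e1" "ball x e1 \<subseteq> U" using U open_contains_ball by blast
  obtain e2 where e2: "0 < e2" "\<forall>y\<in>Bset Tw k. y \<noteq> x \<longrightarrow> e2 \<le> dist x y"
    using finite_set_avoid[OF fin, of x] by blast
  define e where "e = min e1 e2"
  have e: "0 < e" using e1 e2 by (simp add: e_def)
  let ?S = "ball x e - {x}"
  have "connected ?S" by (rule connected_punctured_ball) simp
  have xT: "x \<in> Tw" "x - k \<in> Tw" using x by (auto simp: Bset_iff)
  have avoid: "y \<notin> Bset Tw k" if "y \<in> ?S" for y
    using that e2 by (auto simp: e_def dist_commute)
  have "\<not> (?S \<inter> Tw \<noteq> {} \<and> ?S - Tw \<noteq> {})"
  proof
    assume "?S \<inter> Tw \<noteq> {} \<and> ?S - Tw \<noteq> {}"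
    then obtain z where z: "z \<in> ?S" "z \<in> frontier Tw"
      using connected_Int_frontier[OF \<open>connected ?S\<close>] by blast
    then have "z \<in> U" using e1 by (auto simp: e_def)
    then show False using z U(3) avoid by blast
  qed
  then consider "?S \<inter> Tw = {}" | "?S \<subseteq> Tw" by blast
  then show False
  proof cases
    case 1
    obtain z where "z \<in> Tw" "z \<noteq> x" "dist z x < e" using Tw_perfect[OF xT(1) e] by blast
    then show False using 1 by (auto simp: dist_commute)
  next
    case 2
    obtain w where w: "w \<in> Tw" "w \<noteq> x - k" "dist w (x - k) < e" using Tw_perfect[OF xT(2) e] by blast
    have "dist (w + k) x = dist w (x - k)" by (simp add: dist_norm algebra_simps)
    then have "w + k \<in> ?S" using w by (auto simp: dist_commute algebra_simps)
    moreover have "w + k \<in> Bset Tw k" using 2 w calculation by (auto simp: Bset_iff)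
    ultimately show False using avoid by blast
  qed
qed

end

section \<open>Integer encoding of lattice points and rational points\<close>

type_synonym i3 = "int \<times> int \<times> int"

text \<open>M acting on integer triples, a shift of the first coordinate, the real point p / q,
  the complement of the box [-c1,c1] \<times> [-c2,c2] \<times> [-c3,c3], and p - q m.\<close>

definition iM :: "int \<Rightarrow> int \<Rightarrow> i3 \<Rightarrow> i3" where
  "iM a b p = (case p of (i, j, l) \<Rightarrow> (2 * l, i + b * l, j + a * l))"

definition shift :: "int \<Rightarrow> i3 \<Rightarrow> i3" where
  "shift t p = (case p of (i, j, l) \<Rightarrow> (i + t, j, l))"

definition frac_point :: "int \<Rightarrow> i3 \<Rightarrow> real^3" where
  "frac_point q p = (case p of (i, j, l) \<Rightarrow>
     vec3 (of_int i / of_int q) (of_int j / of_int q) (of_int l / of_int q))"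

definition out_of_box :: "i3 \<Rightarrow> i3 \<Rightarrow> bool" where
  "out_of_box c p = (case c of (c1, c2, c3) \<Rightarrow> case p of (i, j, l) \<Rightarrow>
     c1 < \<bar>i\<bar> \<or> c2 < \<bar>j\<bar> \<or> c3 < \<bar>l\<bar>)"

definition lattice_sub :: "int \<Rightarrow> i3 \<Rightarrow> i3 \<Rightarrow> i3" where
  "lattice_sub q p m = (case p of (i, j, l) \<Rightarrow> case m of (m1, m2, m3) \<Rightarrow>
     (i - q * m1, j - q * m2, l - q * m3))"

text \<open>The three candidate successors of a neighbour k in the neighbour graph.\<close>

definition successors :: "int \<Rightarrow> int \<Rightarrow> i3 \<Rightarrow> i3 list" where
  "successors a b k = [shift 1 (iM a b k), iM a b k, shift (-1) (iM a b k)]"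

lemma expand_frac_point: "expand a b (frac_point q p) = frac_point q (iM a b p)"
  by (cases p) (simp add: frac_point_def iM_def expand_vec3 add_divide_distrib)

lemma frac_point_shift:
  assumes "h \<noteq> 0"
  shows "frac_point (2 * h) (shift h p) = frac_point (2 * h) p + half_e1"
    "frac_point (2 * h) (shift (- h) p) = frac_point (2 * h) p - half_e1"
  using assms by (cases p, simp add: frac_point_def shift_def half_e1_def add_divide_distrib
      diff_divide_distrib)+

lemma frac_point_lattice: "frac_point 1 k \<in> lattice3"
  by (cases k) (auto simp: frac_point_def lattice3_iff)

lemma lattice_frac_point: "m \<in> lattice3 \<Longrightarrow> \<exists>k. m = frac_point 1 k"
  by (auto simp: lattice3_iff frac_point_def)

lemma frac_point_lattice_sub:
  "q \<noteq> 0 \<Longrightarrow> frac_point q p - frac_point 1 m = frac_point q (lattice_sub q p m)"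
  by (cases p, cases m) (simp add: frac_point_def lattice_sub_def diff_divide_distrib)

lemma frac_point_inj: "q \<noteq> 0 \<Longrightarrow> frac_point q p = frac_point q p' \<longleftrightarrow> p = p'"
  by (cases p, cases p') (auto simp: frac_point_def)

lemma frac_point_zero: "frac_point 1 k = 0 \<longleftrightarrow> k = (0, 0, 0)"
  by (cases k) (auto simp: frac_point_def vec3_zero)

lemma successors_nonzero: "k \<noteq> (0, 0, 0) \<Longrightarrow> t \<in> set (successors a b k) \<Longrightarrow> t \<noteq> (0, 0, 0)"
  by (cases k) (auto simp: successors_def iM_def shift_def; presburger)

lemma card_frac_point: "distinct ks \<Longrightarrow> card (frac_point 1 ` set ks) = length ks"
  by (simp add: card_image distinct_card inj_on_def frac_point_inj)

text \<open>dead_point: every digit path from p / 2h leaves the box c within n steps, so the point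
  is not in the tile.  dead_neighbor: every path of the neighbour graph from k leaves the box,
  so B_k is empty.\<close>

fun dead_point :: "int \<Rightarrow> int \<Rightarrow> int \<Rightarrow> i3 \<Rightarrow> nat \<Rightarrow> i3 \<Rightarrow> bool" where
  "dead_point a b h c 0 p = out_of_box c p"
| "dead_point a b h c (Suc n) p = (out_of_box c p \<or>
     (dead_point a b h c n (shift h (iM a b p)) \<and> dead_point a b h c n (shift (- h) (iM a b p))))"

fun dead_neighbor :: "int \<Rightarrow> int \<Rightarrow> i3 \<Rightarrow> nat \<Rightarrow> i3 \<Rightarrow> bool" where
  "dead_neighbor a b c 0 k = out_of_box c k"
| "dead_neighbor a b c (Suc n) k = (out_of_box c k \<or>
     (\<forall>t\<in>set (successors a b k). dead_neighbor a b c n t))"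

text \<open>A list of rational points p / 2h closed under some digit step: it lies in the tile.
  A witness for a point of B_k is such a list containing z and z - 2h k.\<close>

definition self_expanding_list :: "int \<Rightarrow> int \<Rightarrow> int \<Rightarrow> i3 list \<Rightarrow> bool" where
  "self_expanding_list a b h xs =
     (\<forall>p\<in>set xs. shift h (iM a b p) \<in> set xs \<or> shift (- h) (iM a b p) \<in> set xs)"

definition witness_ok :: "int \<Rightarrow> int \<Rightarrow> i3 \<Rightarrow> int \<Rightarrow> i3 list \<Rightarrow> i3 \<Rightarrow> bool" where
  "witness_ok a b k h xs z \<longleftrightarrow>
     0 < h \<and> self_expanding_list a b h xs \<and> z \<in> set xs \<and> lattice_sub (2 * h) z k \<in> set xs"

text \<open>All lattice vectors m for which z / q - m may lie in the box c.\<close>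

definition candidates :: "int \<Rightarrow> i3 \<Rightarrow> i3 \<Rightarrow> i3 list" where
  "candidates q c z = (case c of (c1, c2, c3) \<Rightarrow> case z of (i, j, l) \<Rightarrow>
     [(m1, m2, m3). m1 \<leftarrow> [- ((\<bar>i\<bar> + c1) div q)..(\<bar>i\<bar> + c1) div q],
                   m2 \<leftarrow> [- ((\<bar>j\<bar> + c2) div q)..(\<bar>j\<bar> + c2) div q],
                   m3 \<leftarrow> [- ((\<bar>l\<bar> + c3) div q)..(\<bar>l\<bar> + c3) div q]])"

definition box_list :: "i3 \<Rightarrow> i3 list" where
  "box_list c = (case c of (c1, c2, c3) \<Rightarrow>
     [(m1, m2, m3). m1 \<leftarrow> [- c1..c1], m2 \<leftarrow> [- c2..c2], m3 \<leftarrow> [- c3..c3]])"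

text \<open>face_check: z / 2h lies in no translate T + m except T and T + k.
  neighbor_check: every nonzero k of the box outside the list NB has B_k empty.
  point_check: from every k in SL exactly one successor edge survives, and it stays in SL.
  finite_order: each entry has only dead successors, entries of SL, or later entries.\<close>

definition face_check :: "int \<Rightarrow> int \<Rightarrow> int \<Rightarrow> i3 \<Rightarrow> nat \<Rightarrow> i3 \<Rightarrow> i3 \<Rightarrow> bool" where
  "face_check a b h c n z k = (\<forall>m\<in>set (candidates (2 * h) c z).
     m = (0, 0, 0) \<or> m = k \<or> dead_point a b h c n (lattice_sub (2 * h) z m))"

definition neighbor_check :: "int \<Rightarrow> int \<Rightarrow> i3 \<Rightarrow> nat \<Rightarrow> i3 list \<Rightarrow> bool" where
  "neighbor_check a b c n NB =
     (\<forall>k\<in>set (box_list c). k = (0, 0, 0) \<or> k \<in> set NB \<or> dead_neighbor a b c n k)"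

definition point_check :: "int \<Rightarrow> int \<Rightarrow> i3 \<Rightarrow> nat \<Rightarrow> i3 list \<Rightarrow> bool" where
  "point_check a b c n SL = (\<forall>k\<in>set SL.
     (shift 1 (iM a b k) \<in> set SL \<and> dead_neighbor a b c n (shift (-1) (iM a b k))
        \<and> dead_neighbor a b c n (iM a b k)) \<or>
     (shift (-1) (iM a b k) \<in> set SL \<and> dead_neighbor a b c n (shift 1 (iM a b k))
        \<and> dead_neighbor a b c n (iM a b k)))"

fun finite_order :: "int \<Rightarrow> int \<Rightarrow> i3 \<Rightarrow> nat \<Rightarrow> i3 list \<Rightarrow> i3 list \<Rightarrow> bool" where
  "finite_order a b c n SL [] = True"
| "finite_order a b c n SL (k # ks) = (finite_order a b c n SL ks \<and>
     (\<forall>t\<in>set (successors a b k). dead_neighbor a b c n t \<or> t \<in> set SL \<or> t \<in> set ks))"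

lemma candidates_complete:
  assumes "0 < q" "m \<notin> set (candidates q c z)" shows "out_of_box c (lattice_sub q z m)"
proof -
  obtain c1 c2 c3 where c: "c = (c1, c2, c3)" by (cases c) auto
  obtain i j l where z: "z = (i, j, l)" by (cases z) auto
  obtain m1 m2 m3 where m: "m = (m1, m2, m3)" by (cases m) auto
  have far: "c0 < \<bar>x - q * y\<bar>" if "\<not> \<bar>y\<bar> \<le> (\<bar>x\<bar> + c0) div q" for x y c0 :: int
  proof -
    have "(\<bar>x\<bar> + c0) mod q < q" using assms(1) by simp
    moreover have "q * ((\<bar>x\<bar> + c0) div q) + (\<bar>x\<bar> + c0) mod q = \<bar>x\<bar> + c0"
      by (rule mult_div_mod_eq)
    ultimately have "\<bar>x\<bar> + c0 < q * ((\<bar>x\<bar> + c0) div q) + q" by linarith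
    then have "\<bar>x\<bar> + c0 < q * ((\<bar>x\<bar> + c0) div q + 1)"
      by (simp add: distrib_left)
    moreover have "q * ((\<bar>x\<bar> + c0) div q + 1) \<le> q * \<bar>y\<bar>"
      using that assms(1) by (intro mult_left_mono) auto
    moreover have "\<bar>q * y\<bar> = q * \<bar>y\<bar>" using assms(1) by (simp add: abs_mult)
    ultimately show ?thesis by linarith
  qed
  have "\<not> \<bar>m1\<bar> \<le> (\<bar>i\<bar> + c1) div q \<or> \<not> \<bar>m2\<bar> \<le> (\<bar>j\<bar> + c2) div q \<or> \<not> \<bar>m3\<bar> \<le> (\<bar>l\<bar> + c3) div q"
    using assms(2) unfolding candidates_def c z m by (auto simp: image_iff abs_le_iff)
  then show ?thesis using far unfolding out_of_box_def lattice_sub_def c z m by auto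
qed

lemma box_list_complete: "\<not> out_of_box c k \<Longrightarrow> k \<in> set (box_list c)"
  by (cases c, cases k) (auto simp: out_of_box_def box_list_def image_iff)

text \<open>The box constants \<beta> bound the
  coordinates of P (hence of the tile), and box_radius_ok q c says that the box c contains
  q times the box \<beta>.\<close>

locale boxed_pair = contractive_pair +
  fixes \<beta>1 \<beta>2 \<beta>3 :: real
  assumes P_box: "\<forall>x\<in>P. \<bar>x$1\<bar> \<le> \<beta>1 \<and> \<bar>x$2\<bar> \<le> \<beta>2 \<and> \<bar>x$3\<bar> \<le> \<beta>3"
begin

lemma Tw_box: "x \<in> Tw \<Longrightarrow> \<bar>x$1\<bar> \<le> \<beta>1 \<and> \<bar>x$2\<bar> \<le> \<beta>2 \<and> \<bar>x$3\<bar> \<le> \<beta>3"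
  using Tw_subset_P P_box by blast

definition box_radius_ok :: "int \<Rightarrow> i3 \<Rightarrow> bool" where
  "box_radius_ok q c \<longleftrightarrow> (case c of (c1, c2, c3) \<Rightarrow>
     of_int q * \<beta>1 < of_int c1 + 1 \<and> of_int q * \<beta>2 < of_int c2 + 1 \<and> of_int q * \<beta>3 < of_int c3 + 1)"

lemma box_radius_bound:
  assumes "box_radius_ok q c" "\<bar>real_of_int i\<bar> \<le> of_int q * \<beta>1"
    "\<bar>real_of_int j\<bar> \<le> of_int q * \<beta>2" "\<bar>real_of_int l\<bar> \<le> of_int q * \<beta>3"
  shows "\<not> out_of_box c (i, j, l)"
proof -
  obtain c1 c2 c3 where c: "c = (c1, c2, c3)" by (cases c) auto
  have "\<bar>real_of_int i\<bar> < of_int c1 + 1" "\<bar>real_of_int j\<bar> < of_int c2 + 1"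
    "\<bar>real_of_int l\<bar> < of_int c3 + 1"
    using assms by (auto simp: box_radius_ok_def c)
  then have "\<bar>i\<bar> \<le> c1" "\<bar>j\<bar> \<le> c2" "\<bar>l\<bar> \<le> c3" by linarith+
  then show ?thesis by (simp add: out_of_box_def c)
qed

text \<open>Soundness of the box test: for rational points, and for neighbours (both T and T + k
  meet B_k, so |k| is at most twice the box \<beta>).\<close>

lemma out_of_box_not_in_Tw:
  assumes "0 < q" "box_radius_ok q c" "out_of_box c z" shows "frac_point q z \<notin> Tw"
proof
  assume "frac_point q z \<in> Tw"
  obtain i j l where z: "z = (i, j, l)" by (cases z) auto
  have q: "0 < real_of_int q" using assms(1) by simp
  have "\<bar>of_int i / of_int q\<bar> \<le> \<beta>1" "\<bar>of_int j / of_int q\<bar> \<le> \<beta>2" "\<bar>of_int l / of_int q\<bar> \<le> \<beta>3"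
    using Tw_box[OF \<open>frac_point q z \<in> Tw\<close>] by (auto simp: z frac_point_def)
  then have "\<bar>real_of_int i\<bar> \<le> of_int q * \<beta>1" "\<bar>real_of_int j\<bar> \<le> of_int q * \<beta>2"
    "\<bar>real_of_int l\<bar> \<le> of_int q * \<beta>3"
    using q by (auto simp: abs_divide pos_divide_le_eq mult.commute)
  then show False using box_radius_bound assms(2,3) z by blast
qed

lemma out_of_box_empty:
  assumes "box_radius_ok 2 c" "out_of_box c k" shows "Bset Tw (frac_point 1 k) = {}"
proof (rule ccontr)
  assume "Bset Tw (frac_point 1 k) \<noteq> {}"
  then obtain y where y: "y \<in> Tw" "y - frac_point 1 k \<in> Tw" by (auto simp: Bset_iff)
  obtain i j l where k: "k = (i, j, l)" by (cases k) auto
  have "\<bar>y$1\<bar> \<le> \<beta>1" "\<bar>y$2\<bar> \<le> \<beta>2" "\<bar>y$3\<bar> \<le> \<beta>3"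
    and "\<bar>y$1 - of_int i\<bar> \<le> \<beta>1" "\<bar>y$2 - of_int j\<bar> \<le> \<beta>2" "\<bar>y$3 - of_int l\<bar> \<le> \<beta>3"
    using Tw_box[OF y(1)] Tw_box[OF y(2)] by (auto simp: k frac_point_def)
  then have "\<bar>real_of_int i\<bar> \<le> of_int 2 * \<beta>1" "\<bar>real_of_int j\<bar> \<le> of_int 2 * \<beta>2"
    "\<bar>real_of_int l\<bar> \<le> of_int 2 * \<beta>3"
    by linarith+
  then show False using box_radius_bound assms k by blast
qed

text \<open>Soundness of dead_point: if z / 2h were in T, one of its two digit successors would be.\<close>

lemma dead_point_sound:
  assumes "0 < h" "box_radius_ok (2 * h) c" "dead_point a b h c n z"
  shows "frac_point (2 * h) z \<notin> Tw"
  using assms(3)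
proof (induction n arbitrary: z)
  case (Suc n)
  show ?case
  proof
    assume z: "frac_point (2 * h) z \<in> Tw"
    then have "\<not> out_of_box c z" using out_of_box_not_in_Tw[of "2 * h" c z] assms(1,2) by auto
    with Suc.prems have "dead_point a b h c n (shift h (iM a b z))"
      "dead_point a b h c n (shift (- h) (iM a b z))" by auto
    moreover have "frac_point (2 * h) (shift h (iM a b z)) \<in> Tw \<or>
        frac_point (2 * h) (shift (- h) (iM a b z)) \<in> Tw"
      using Tw_step[OF z] assms(1) by (simp add: frac_point_shift expand_frac_point)
    ultimately show False using Suc.IH by blast
  qed
next
  case 0
  then show ?case using out_of_box_not_in_Tw[of "2 * h", OF _ assms(2)] assms(1) by simp
qed

lemma neighbor_step_int:
  assumes "y \<in> Bset Tw (frac_point 1 k)"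
  shows "M y + half_e1 \<in> Bset Tw (frac_point 1 (shift 1 (iM a b k))) \<or>
    M y - half_e1 \<in> Bset Tw (frac_point 1 (shift (-1) (iM a b k))) \<or>
    M y + half_e1 \<in> Bset Tw (frac_point 1 (iM a b k)) \<or>
    M y - half_e1 \<in> Bset Tw (frac_point 1 (iM a b k))"
proof -
  obtain s s' where ss: "s = half_e1 \<or> s = - half_e1" "s' = half_e1 \<or> s' = - half_e1"
    "M y + s \<in> Bset Tw (M (frac_point 1 k) + s - s')"
    using neighbor_step[OF assms] by blast
  have "frac_point 1 (shift t (iM a b k)) = M (frac_point 1 k) + of_int t *\<^sub>R (half_e1 + half_e1)"
    for t
    by (cases k) (simp add: frac_point_def shift_def iM_def half_e1_def expand_vec3)
  moreover have "frac_point 1 (iM a b k) = M (frac_point 1 k)" by (simp add: expand_frac_point)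
  ultimately show ?thesis
    using ss by (auto simp: algebra_simps)
qed

lemma dead_neighbor_sound:
  assumes "box_radius_ok 2 c" "dead_neighbor a b c n k" "k \<noteq> (0, 0, 0)"
  shows "Bset Tw (frac_point 1 k) = {}"
  using assms(2,3)
proof (induction n arbitrary: k)
  case (Suc n)
  show ?case
  proof (cases "out_of_box c k")
    case False
    with Suc.prems have "Bset Tw (frac_point 1 t) = {}" if "t \<in> set (successors a b k)" for t
      using Suc.IH successors_nonzero that by auto
    then have "Bset Tw (frac_point 1 (shift 1 (iM a b k))) = {}" "Bset Tw (frac_point 1 (iM a b k)) = {}"
      "Bset Tw (frac_point 1 (shift (-1) (iM a b k))) = {}"
      by (simp_all add: successors_def)
    then show ?thesis using neighbor_step_int by blast
  qed (use out_of_box_empty assms(1) in auto)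
qed (use out_of_box_empty assms(1) in auto)

lemma self_expanding_list_sound:
  assumes "0 < h" "self_expanding_list a b h xs" "z \<in> set xs"
  shows "frac_point (2 * h) z \<in> Tw"
proof -
  let ?X = "frac_point (2 * h) ` set xs"
  have "?X \<subseteq> Tw"
  proof (rule self_expanding_subset_Tw)
    show "\<forall>x\<in>?X. l1 x \<le> (\<Sum>x\<in>?X. l1 x)"
      by (intro ballI member_le_sum) (auto simp: l1_nonneg)
    show "\<forall>x\<in>?X. M x + half_e1 \<in> ?X \<or> M x - half_e1 \<in> ?X"
      using assms(1,2) by (auto simp: self_expanding_list_def expand_frac_point
          frac_point_shift[symmetric])
  qed
  then show ?thesis using assms(3) by auto
qed

lemma witness_sound:
  assumes "witness_ok a b k h xs z" shows "frac_point (2 * h) z \<in> Bset Tw (frac_point 1 k)"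
proof -
  have h: "0 < h" "self_expanding_list a b h xs" "z \<in> set xs" "lattice_sub (2 * h) z k \<in> set xs"
    using assms by (auto simp: witness_ok_def)
  then have "frac_point (2 * h) z \<in> Tw" "frac_point (2 * h) (lattice_sub (2 * h) z k) \<in> Tw"
    using self_expanding_list_sound by blast+
  then show ?thesis using frac_point_lattice_sub[of "2 * h" z k] h(1) by (simp add: Bset_iff)
qed

lemma two_witnesses_distinct:
  assumes "witness_ok a b k h xs z1" "witness_ok a b k h xs z2" "z1 \<noteq> z2"
  shows "frac_point (2 * h) z1 \<noteq> frac_point (2 * h) z2"
  using assms frac_point_inj[of "2 * h"] by (auto simp: witness_ok_def)

lemma face_check_sound:
  assumes w: "witness_ok a b k h xs z" and c: "box_radius_ok (2 * h) c" and k: "k \<noteq> (0, 0, 0)"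
    and check: "face_check a b h c n z k"
  shows "is_face Tw (frac_point 1 k)"
proof (rule face_criterion)
  show "frac_point 1 k \<noteq> 0" using k frac_point_zero by blast
  show "frac_point (2 * h) z \<in> Bset Tw (frac_point 1 k)" by (rule witness_sound[OF w])
  have h: "0 < h" using w by (simp add: witness_ok_def)
  show "\<forall>m\<in>lattice3. m \<noteq> 0 \<longrightarrow> m \<noteq> frac_point 1 k \<longrightarrow> frac_point (2 * h) z - m \<notin> Tw"
  proof (intro ballI impI)
    fix m assume m: "m \<in> lattice3" "m \<noteq> 0" "m \<noteq> frac_point 1 k"
    then obtain mm where mm: "m = frac_point 1 mm" using lattice_frac_point by blast
    have e: "frac_point (2 * h) z - m = frac_point (2 * h) (lattice_sub (2 * h) z mm)"
      using frac_point_lattice_sub[of "2 * h" z mm] h mm by simp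
    show "frac_point (2 * h) z - m \<notin> Tw"
    proof (cases "mm \<in> set (candidates (2 * h) c z)")
      case True
      moreover have "mm \<noteq> (0, 0, 0)" "mm \<noteq> k" using m mm frac_point_zero by auto
      ultimately have "dead_point a b h c n (lattice_sub (2 * h) z mm)"
        using check by (auto simp: face_check_def)
      then show ?thesis unfolding e using dead_point_sound[OF h c] by blast
    next
      case False
      then show ?thesis
        unfolding e using candidates_complete out_of_box_not_in_Tw c h by simp
    qed
  qed
qed

lemma neighbor_check_sound:
  assumes c: "box_radius_ok 2 c" and check: "neighbor_check a b c n NB"
  shows "neighbors Tw \<subseteq> frac_point 1 ` set NB"
proof
  fix k assume k: "k \<in> neighbors Tw"
  then have "k \<in> lattice3" by (simp add: neighbors_def)
  then obtain kk where kk: "k = frac_point 1 kk" using lattice_frac_point by blast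
  have nz: "kk \<noteq> (0, 0, 0)" and ne: "Bset Tw (frac_point 1 kk) \<noteq> {}"
    using k kk frac_point_zero by (auto simp: neighbors_def)
  then have "kk \<in> set (box_list c)" using out_of_box_empty[OF c] box_list_complete by blast
  then have "kk \<in> set NB" using check nz dead_neighbor_sound[OF c _ nz] ne
    by (auto simp: neighbor_check_def)
  then show "k \<in> frac_point 1 ` set NB" using kk by blast
qed

lemma witness_neighbor:
  assumes "witness_ok a b k h xs z" "k \<noteq> (0, 0, 0)" shows "frac_point 1 k \<in> neighbors Tw"
  using witness_sound[OF assms(1)] assms(2) frac_point_zero frac_point_lattice
  by (auto simp: neighbors_def)

lemma point_check_step:
  assumes c: "box_radius_ok 2 c" and check: "point_check a b c n SL"
    and nz: "(0, 0, 0) \<notin> set SL" and k: "k \<in> set SL"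
  shows "\<exists>t\<in>set SL. \<exists>s. \<forall>y\<in>Bset Tw (frac_point 1 k). M y + s \<in> Bset Tw (frac_point 1 t)"
proof -
  have empty: "Bset Tw (frac_point 1 t) = {}"
    if "t \<in> set (successors a b k)" "dead_neighbor a b c n t" for t
    using dead_neighbor_sound[OF c] successors_nonzero[OF _ that(1)] k nz that(2) by metis
  have alt: "(shift 1 (iM a b k) \<in> set SL \<and> dead_neighbor a b c n (shift (-1) (iM a b k))
        \<and> dead_neighbor a b c n (iM a b k)) \<or>
      (shift (-1) (iM a b k) \<in> set SL \<and> dead_neighbor a b c n (shift 1 (iM a b k))
        \<and> dead_neighbor a b c n (iM a b k))"
    using check k unfolding point_check_def by blast
  have mem: "shift 1 (iM a b k) \<in> set (successors a b k)" "iM a b k \<in> set (successors a b k)"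
    "shift (-1) (iM a b k) \<in> set (successors a b k)"
    by (simp_all add: successors_def)
  consider
    "shift 1 (iM a b k) \<in> set SL" "Bset Tw (frac_point 1 (shift (-1) (iM a b k))) = {}"
      "Bset Tw (frac_point 1 (iM a b k)) = {}"
    | "shift (-1) (iM a b k) \<in> set SL" "Bset Tw (frac_point 1 (shift 1 (iM a b k))) = {}"
      "Bset Tw (frac_point 1 (iM a b k)) = {}"
    using alt empty[OF mem(1)] empty[OF mem(2)] empty[OF mem(3)] by blast
  then show ?thesis
  proof cases
    case 1
    then show ?thesis using neighbor_step_int by blast
  next
    case 2
    have "M y + - half_e1 \<in> Bset Tw (frac_point 1 (shift (-1) (iM a b k)))"
      if "y \<in> Bset Tw (frac_point 1 k)" for y
      using neighbor_step_int[OF that] 2 by simp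
    then show ?thesis using 2 by blast
  qed
qed

lemma point_check_unique:
  assumes c: "box_radius_ok 2 c" and check: "point_check a b c n SL"
    and nz: "(0, 0, 0) \<notin> set SL" and k: "k \<in> set SL"
    and y: "y \<in> Bset Tw (frac_point 1 k)" "y' \<in> Bset Tw (frac_point 1 k)"
  shows "y = y'"
proof (rule forced_path_unique[where S = "frac_point 1 ` set SL"])
  show "frac_point 1 k \<in> frac_point 1 ` set SL" using k by blast
  show "y \<in> Bset Tw (frac_point 1 k)" "y' \<in> Bset Tw (frac_point 1 k)" by fact+
next
  fix v y y' assume "v \<in> frac_point 1 ` set SL" and y: "y \<in> Bset Tw v" "y' \<in> Bset Tw v"
  then show "\<exists>k'\<in>frac_point 1 ` set SL. \<exists>s. M y + s \<in> Bset Tw k' \<and> M y' + s \<in> Bset Tw k'"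
    using point_check_step[OF c check nz] by blast
qed

lemma finite_if_unique:
  assumes "\<And>y y'. y \<in> S \<Longrightarrow> y' \<in> S \<Longrightarrow> y = y'" shows "finite S"
proof (cases "S = {}")
  case False
  then obtain y where "y \<in> S" by blast
  then have "S = {y}" using assms by blast
  then show ?thesis by simp
qed simp

text \<open>B_k is covered by the images of the B_t (t a successor of k) under the inverse digit
  maps, so B_k is finite when these are.\<close>

lemma finite_from_successors:
  assumes "\<And>t. t \<in> set (successors a b k) \<Longrightarrow> finite (Bset Tw (frac_point 1 t))"
  shows "finite (Bset Tw (frac_point 1 k))"
proof -
  let ?B = "\<lambda>t. Bset Tw (frac_point 1 t)"
  let ?g1 = "\<lambda>z. L (z - half_e1)" and ?g2 = "\<lambda>z. L (z + half_e1)"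
  have "?B k \<subseteq> ?g1 ` (?B (shift 1 (iM a b k)) \<union> ?B (iM a b k))
      \<union> ?g2 ` (?B (shift (-1) (iM a b k)) \<union> ?B (iM a b k))"
  proof
    fix y assume y: "y \<in> ?B k"
    have "y = ?g1 (M y + half_e1)" "y = ?g2 (M y - half_e1)" by simp_all
    then show "y \<in> ?g1 ` (?B (shift 1 (iM a b k)) \<union> ?B (iM a b k))
        \<union> ?g2 ` (?B (shift (-1) (iM a b k)) \<union> ?B (iM a b k))"
      using neighbor_step_int[OF y] by (blast intro: image_eqI)
  qed
  moreover have "finite (?g1 ` (?B (shift 1 (iM a b k)) \<union> ?B (iM a b k))
      \<union> ?g2 ` (?B (shift (-1) (iM a b k)) \<union> ?B (iM a b k)))"
    using assms by (simp add: successors_def)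
  ultimately show ?thesis by (rule finite_subset)
qed

lemma finite_order_sound:
  assumes c: "box_radius_ok 2 c" and check: "point_check a b c n SL"
    and nz: "(0, 0, 0) \<notin> set SL" "(0, 0, 0) \<notin> set FN"
    and order: "finite_order a b c n SL FN"
  shows "\<forall>k\<in>set FN. finite (Bset Tw (frac_point 1 k))"
  using order nz(2)
proof (induction FN)
  case (Cons k ks)
  have IH: "\<forall>k\<in>set ks. finite (Bset Tw (frac_point 1 k))" using Cons.IH Cons.prems by simp
  have "k \<noteq> (0, 0, 0)" using Cons.prems(2) by auto
  have "finite (Bset Tw (frac_point 1 t))" if t: "t \<in> set (successors a b k)" for t
  proof -
    have t0: "t \<noteq> (0, 0, 0)" using successors_nonzero \<open>k \<noteq> (0, 0, 0)\<close> t by blast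
    from Cons.prems(1) t have "dead_neighbor a b c n t \<or> t \<in> set SL \<or> t \<in> set ks" by simp
    then show ?thesis
    proof (elim disjE)
      assume "dead_neighbor a b c n t"
      then show ?thesis using dead_neighbor_sound[OF c _ t0] by simp
    next
      assume "t \<in> set SL"
      then show ?thesis by (rule finite_if_unique[OF point_check_unique[OF c check nz(1)]])
    qed (use IH in blast)
  qed
  then show ?case using IH finite_from_successors by auto
qed simp

end

text \<open>A certificate lists the neighbours in three groups with witnesses: point neighbours
  (one witness point), faces (two witness points and a face check), and the remaining
  neighbours (two witness points; their B_k are shown finite by finite_order).\<close>

type_synonym point_witness = "i3 \<times> int \<times> i3 list \<times> i3"
type_synonym face_witness = "i3 \<times> i3 list \<times> i3 \<times> i3"
type_synonym pair_witness = "i3 \<times> int \<times> i3 list \<times> i3 \<times> i3"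

definition point_witness_ok :: "int \<Rightarrow> int \<Rightarrow> point_witness \<Rightarrow> bool" where
  "point_witness_ok a b w = (case w of (k, h, xs, z) \<Rightarrow> witness_ok a b k h xs z)"

definition face_witness_ok :: "int \<Rightarrow> int \<Rightarrow> int \<Rightarrow> i3 \<Rightarrow> nat \<Rightarrow> face_witness \<Rightarrow> bool" where
  "face_witness_ok a b h c n w = (case w of (k, xs, z1, z2) \<Rightarrow>
     witness_ok a b k h xs z1 \<and> witness_ok a b k h xs z2 \<and> z1 \<noteq> z2 \<and> face_check a b h c n z1 k)"

definition pair_witness_ok :: "int \<Rightarrow> int \<Rightarrow> pair_witness \<Rightarrow> bool" where
  "pair_witness_ok a b w = (case w of (k, h, xs, z1, z2) \<Rightarrow>
     witness_ok a b k h xs z1 \<and> witness_ok a b k h xs z2 \<and> z1 \<noteq> z2)"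

definition certificate_ok :: "int \<Rightarrow> int \<Rightarrow> i3 \<Rightarrow> nat \<Rightarrow> int \<Rightarrow> i3 \<Rightarrow> nat \<Rightarrow>
    point_witness list \<Rightarrow> face_witness list \<Rightarrow> pair_witness list \<Rightarrow> bool" where
  "certificate_ok a b c n hf cf nf WS WF WN \<longleftrightarrow>
     distinct (map fst WS @ map fst WF @ map fst WN) \<and>
     (0, 0, 0) \<notin> set (map fst WS @ map fst WF @ map fst WN) \<and>
     neighbor_check a b c n (map fst WS @ map fst WF @ map fst WN) \<and>
     point_check a b c n (map fst WS) \<and> finite_order a b c n (map fst WS) (map fst WN) \<and>
     list_all (point_witness_ok a b) WS \<and> list_all (face_witness_ok a b hf cf nf) WF \<and>
     list_all (pair_witness_ok a b) WN"

lemma partition_census: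
  assumes "N \<subseteq> f ` (S \<union> F \<union> R)"
    and "\<forall>k\<in>S. f k \<in> N \<and> P (f k) \<and> \<not> Q (f k)"
    and "\<forall>k\<in>F. f k \<in> N \<and> Q (f k) \<and> \<not> P (f k)"
    and "\<forall>k\<in>R. f k \<in> N \<and> \<not> Q (f k) \<and> \<not> P (f k)"
  shows "N = f ` (S \<union> F \<union> R)" "{x \<in> N. Q x} = f ` F" "{x \<in> N. P x} = f ` S"
    "{x \<in> N. \<not> Q x \<and> \<not> P x} = f ` R"
  using assms by blast+

context boxed_pair
begin

lemma two_points_not_point_neighbor:
  assumes "x \<in> Bset Tw k" "x' \<in> Bset Tw k" "x \<noteq> x'" shows "\<not> point_neighbor Tw k"
  using assms by (auto simp: point_neighbor_def)

lemma point_entry: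
  assumes c: "box_radius_ok 2 c" and check: "point_check a b c n SL" and nz: "(0, 0, 0) \<notin> set SL"
    and k: "k \<in> set SL" and w: "witness_ok a b k h xs z"
  shows "frac_point 1 k \<in> neighbors Tw \<and> point_neighbor Tw (frac_point 1 k) \<and>
    \<not> is_face Tw (frac_point 1 k)"
proof -
  have k0: "k \<noteq> (0, 0, 0)" using nz k by blast
  have x: "frac_point (2 * h) z \<in> Bset Tw (frac_point 1 k)" by (rule witness_sound[OF w])
  then have "Bset Tw (frac_point 1 k) = {frac_point (2 * h) z}"
    using point_check_unique[OF c check nz k _ x] by blast
  then show ?thesis
    using witness_neighbor[OF w k0] k0 frac_point_zero finite_not_face
    by (auto simp: point_neighbor_def)
qed

lemma face_entry:
  assumes cf: "box_radius_ok (2 * hf) cf" and k0: "k \<noteq> (0, 0, 0)"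
    and w: "face_witness_ok a b hf cf nf (k, xs, z1, z2)"
  shows "frac_point 1 k \<in> neighbors Tw \<and> is_face Tw (frac_point 1 k) \<and>
    \<not> point_neighbor Tw (frac_point 1 k)"
proof -
  have w1: "witness_ok a b k hf xs z1" and w2: "witness_ok a b k hf xs z2"
    and "z1 \<noteq> z2" and check: "face_check a b hf cf nf z1 k"
    using w by (auto simp: face_witness_ok_def)
  then show ?thesis
    using witness_neighbor[OF w1 k0] face_check_sound[OF w1 cf k0 check]
      two_points_not_point_neighbor[OF witness_sound[OF w1] witness_sound[OF w2]]
      two_witnesses_distinct[OF w1 w2] by blast
qed

lemma pair_entry:
  assumes k0: "k \<noteq> (0, 0, 0)" and w: "pair_witness_ok a b (k, h, xs, z1, z2)"
    and fin: "finite (Bset Tw (frac_point 1 k))"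
  shows "frac_point 1 k \<in> neighbors Tw \<and> \<not> is_face Tw (frac_point 1 k) \<and>
    \<not> point_neighbor Tw (frac_point 1 k) \<and> 2 \<le> card (Bset Tw (frac_point 1 k))"
proof -
  have w1: "witness_ok a b k h xs z1" and w2: "witness_ok a b k h xs z2" and "z1 \<noteq> z2"
    using w by (auto simp: pair_witness_ok_def)
  then have two: "frac_point (2 * h) z1 \<noteq> frac_point (2 * h) z2"
    using two_witnesses_distinct by blast
  have "card {frac_point (2 * h) z1, frac_point (2 * h) z2} \<le> card (Bset Tw (frac_point 1 k))"
    using witness_sound[OF w1] witness_sound[OF w2] fin by (intro card_mono) auto
  then show ?thesis
    using witness_neighbor[OF w1 k0] finite_not_face[OF fin] two
      two_points_not_point_neighbor[OF witness_sound[OF w1] witness_sound[OF w2]] by auto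
qed

lemma point_entries:
  assumes c: "box_radius_ok 2 c" and pc: "point_check a b c n (map fst WS)"
    and nz: "(0, 0, 0) \<notin> set (map fst WS)" and ws: "list_all (point_witness_ok a b) WS"
  shows "\<forall>k\<in>set (map fst WS). frac_point 1 k \<in> neighbors Tw \<and>
    point_neighbor Tw (frac_point 1 k) \<and> \<not> is_face Tw (frac_point 1 k)"
proof
  fix k assume k: "k \<in> set (map fst WS)"
  then obtain h xs z where "(k, h, xs, z) \<in> set WS" by auto
  then have "witness_ok a b k h xs z"
    using ws unfolding list_all_iff point_witness_ok_def by fastforce
  then show "frac_point 1 k \<in> neighbors Tw \<and> point_neighbor Tw (frac_point 1 k) \<and>
      \<not> is_face Tw (frac_point 1 k)"
    using point_entry[OF c pc nz k] by blast
qed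

lemma face_entries:
  assumes cf: "box_radius_ok (2 * hf) cf"
    and nz: "(0, 0, 0) \<notin> set (map fst WF)" and wf: "list_all (face_witness_ok a b hf cf nf) WF"
  shows "\<forall>k\<in>set (map fst WF). frac_point 1 k \<in> neighbors Tw \<and>
    is_face Tw (frac_point 1 k) \<and> \<not> point_neighbor Tw (frac_point 1 k)"
proof
  fix k assume k: "k \<in> set (map fst WF)"
  then obtain xs z1 z2 where "(k, xs, z1, z2) \<in> set WF" by auto
  then have "face_witness_ok a b hf cf nf (k, xs, z1, z2)"
    using wf unfolding list_all_iff by blast
  moreover have "k \<noteq> (0, 0, 0)" using nz k by blast
  ultimately show "frac_point 1 k \<in> neighbors Tw \<and> is_face Tw (frac_point 1 k) \<and>
      \<not> point_neighbor Tw (frac_point 1 k)"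
    using face_entry[OF cf] by blast
qed

lemma pair_entries:
  assumes nz: "(0, 0, 0) \<notin> set (map fst WN)" and wn: "list_all (pair_witness_ok a b) WN"
    and fin: "\<forall>k\<in>set (map fst WN). finite (Bset Tw (frac_point 1 k))"
  shows "\<forall>k\<in>set (map fst WN). frac_point 1 k \<in> neighbors Tw \<and>
    \<not> is_face Tw (frac_point 1 k) \<and> \<not> point_neighbor Tw (frac_point 1 k) \<and>
    2 \<le> card (Bset Tw (frac_point 1 k))"
proof
  fix k assume k: "k \<in> set (map fst WN)"
  then obtain h xs z1 z2 where "(k, h, xs, z1, z2) \<in> set WN" by auto
  then have "pair_witness_ok a b (k, h, xs, z1, z2)" using wn unfolding list_all_iff by blast
  moreover have "k \<noteq> (0, 0, 0)" using nz k by blast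
  ultimately show "frac_point 1 k \<in> neighbors Tw \<and> \<not> is_face Tw (frac_point 1 k) \<and>
      \<not> point_neighbor Tw (frac_point 1 k) \<and> 2 \<le> card (Bset Tw (frac_point 1 k))"
    using pair_entry fin k by blast
qed

theorem neighbor_census:
  assumes c: "box_radius_ok 2 c" and cf: "box_radius_ok (2 * hf) cf"
    and cert: "certificate_ok a b c n hf cf nf WS WF WN"
  shows "card (neighbors Tw) = length WS + length WF + length WN"
    "card {k \<in> neighbors Tw. is_face Tw k} = length WF"
    "card {k \<in> neighbors Tw. point_neighbor Tw k} = length WS"
    "card {k \<in> neighbors Tw. \<not> is_face Tw k \<and> \<not> point_neighbor Tw k} = length WN"
    "\<forall>k\<in>neighbors Tw. \<not> is_face Tw k \<and> \<not> point_neighbor Tw k \<longrightarrow>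
       finite (Bset Tw k) \<and> 2 \<le> card (Bset Tw k)"
proof -
  define SL FL FN where "SL = map fst WS" and "FL = map fst WF" and "FN = map fst WN"
  have dist: "distinct (SL @ FL @ FN)" and nz: "(0, 0, 0) \<notin> set (SL @ FL @ FN)"
    and nb: "neighbor_check a b c n (SL @ FL @ FN)" and pc: "point_check a b c n SL"
    and fo: "finite_order a b c n SL FN" and ws: "list_all (point_witness_ok a b) WS"
    and wf: "list_all (face_witness_ok a b hf cf nf) WF" and wn: "list_all (pair_witness_ok a b) WN"
    using cert by (simp_all add: certificate_ok_def SL_def FL_def FN_def)
  have nzS: "(0, 0, 0) \<notin> set (map fst WS)" and nzF: "(0, 0, 0) \<notin> set (map fst WF)"
    and nzN: "(0, 0, 0) \<notin> set (map fst WN)"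
    using nz by (simp_all add: SL_def FL_def FN_def)
  have fin: "\<forall>k\<in>set FN. finite (Bset Tw (frac_point 1 k))"
    using finite_order_sound[OF c pc _ _ fo] nzS nzN by (simp add: SL_def FN_def)
  have S: "\<forall>k\<in>set SL. frac_point 1 k \<in> neighbors Tw \<and> point_neighbor Tw (frac_point 1 k) \<and>
      \<not> is_face Tw (frac_point 1 k)"
    using point_entries[OF c _ nzS ws] pc unfolding SL_def by blast
  have F: "\<forall>k\<in>set FL. frac_point 1 k \<in> neighbors Tw \<and> is_face Tw (frac_point 1 k) \<and>
      \<not> point_neighbor Tw (frac_point 1 k)"
    using face_entries[OF cf nzF wf] unfolding FL_def by blast
  have N: "\<forall>k\<in>set FN. frac_point 1 k \<in> neighbors Tw \<and> \<not> is_face Tw (frac_point 1 k) \<and>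
      \<not> point_neighbor Tw (frac_point 1 k) \<and> 2 \<le> card (Bset Tw (frac_point 1 k))"
    using pair_entries[OF nzN wn] fin unfolding FN_def by blast
  have cover: "neighbors Tw \<subseteq> frac_point 1 ` (set SL \<union> set FL \<union> set FN)"
    using neighbor_check_sound[OF c nb] by auto
  note sets = partition_census[OF cover, of "point_neighbor Tw" "is_face Tw"]
  have cards: "card (frac_point 1 ` set SL) = length WS" "card (frac_point 1 ` set FL) = length WF"
    "card (frac_point 1 ` set FN) = length WN"
    "card (frac_point 1 ` (set SL \<union> set FL \<union> set FN)) = length WS + length WF + length WN"
    using card_frac_point[of SL] card_frac_point[of FL] card_frac_point[of FN]
      card_frac_point[of "SL @ FL @ FN"] dist
    by (simp_all add: SL_def FL_def FN_def Un_assoc)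
  show "card (neighbors Tw) = length WS + length WF + length WN"
    "card {k \<in> neighbors Tw. is_face Tw k} = length WF"
    "card {k \<in> neighbors Tw. point_neighbor Tw k} = length WS"
    "card {k \<in> neighbors Tw. \<not> is_face Tw k \<and> \<not> point_neighbor Tw k} = length WN"
    using sets S F N cards by (simp_all add: conj_commute)
  show "\<forall>k\<in>neighbors Tw. \<not> is_face Tw k \<and> \<not> point_neighbor Tw k \<longrightarrow>
      finite (Bset Tw k) \<and> 2 \<le> card (Bset Tw k)"
  proof (intro ballI impI)
    fix k assume "k \<in> neighbors Tw" "\<not> is_face Tw k \<and> \<not> point_neighbor Tw k"
    then have "k \<in> frac_point 1 ` set FN" using sets(4) S F N by blast
    then show "finite (Bset Tw k) \<and> 2 \<le> card (Bset Tw k)" using N fin by blast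
  qed
qed

end

section \<open>Invariant regions and the halving condition\<close>

text \<open>Both hypotheses of contractive_pair reduce to finitely many numerical conditions on
  the columns of powers of M^{-1}.\<close>

lemma shrink_pow_vec3:
  "(shrink a b ^^ n) (vec3 x y z) =
     x *\<^sub>R (shrink a b ^^ n) (vec3 1 0 0) + y *\<^sub>R (shrink a b ^^ n) (vec3 0 1 0) + z *\<^sub>R (shrink a b ^^ n) (vec3 0 0 1)"
proof -
  note lin = linear_shrink_pow[of n a b]
  have "(shrink a b ^^ n) (vec3 x y z) =
      (shrink a b ^^ n) (x *\<^sub>R vec3 1 0 0 + y *\<^sub>R vec3 0 1 0 + z *\<^sub>R vec3 0 0 1)"
    by simp
  also have "\<dots> = x *\<^sub>R (shrink a b ^^ n) (vec3 1 0 0) + y *\<^sub>R (shrink a b ^^ n) (vec3 0 1 0)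
      + z *\<^sub>R (shrink a b ^^ n) (vec3 0 0 1)"
    by (simp only: linear_add[OF lin] linear_scale[OF lin])
  finally show ?thesis .
qed

lemma halving_from_columns:
  assumes "l1 ((shrink a b ^^ p) (vec3 1 0 0)) \<le> 1/2" "l1 ((shrink a b ^^ p) (vec3 0 1 0)) \<le> 1/2"
    "l1 ((shrink a b ^^ p) (vec3 0 0 1)) \<le> 1/2"
  shows "l1 ((shrink a b ^^ p) x) \<le> l1 x / 2"
proof -
  obtain x1 x2 x3 where x: "x = vec3 x1 x2 x3" by (metis vec3_eta)
  let ?c1 = "(shrink a b ^^ p) (vec3 1 0 0)" and ?c2 = "(shrink a b ^^ p) (vec3 0 1 0)"
    and ?c3 = "(shrink a b ^^ p) (vec3 0 0 1)"
  have e: "(shrink a b ^^ p) x = x1 *\<^sub>R ?c1 + x2 *\<^sub>R ?c2 + x3 *\<^sub>R ?c3"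
    unfolding x by (rule shrink_pow_vec3)
  have "l1 ((shrink a b ^^ p) x) \<le> l1 (x1 *\<^sub>R ?c1) + l1 (x2 *\<^sub>R ?c2) + l1 (x3 *\<^sub>R ?c3)"
    unfolding e
    using l1_triangle[of "x1 *\<^sub>R ?c1 + x2 *\<^sub>R ?c2" "x3 *\<^sub>R ?c3"] l1_triangle[of "x1 *\<^sub>R ?c1" "x2 *\<^sub>R ?c2"]
    by linarith
  also have "\<dots> = \<bar>x1\<bar> * l1 ?c1 + \<bar>x2\<bar> * l1 ?c2 + \<bar>x3\<bar> * l1 ?c3" by (simp only: l1_scale)
  also have "\<dots> \<le> \<bar>x1\<bar> * (1/2) + \<bar>x2\<bar> * (1/2) + \<bar>x3\<bar> * (1/2)"
    using assms by (intro add_mono mult_left_mono) auto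
  also have "\<dots> = l1 x / 2" by (simp add: l1_def x)
  finally show ?thesis .
qed

text \<open>It is compact, contains 0, and is mapped into itself by f1 and f2 provided the boxes shrink
  along the orbit of the digit (step condition) and the n-th image of the first box fits into
  the last one (closing condition).\<close>

definition orbit_box :: "int \<Rightarrow> int \<Rightarrow> nat \<Rightarrow> (nat \<Rightarrow> real^3) \<Rightarrow> (real^3) set" where
  "orbit_box a b n B = {x. \<forall>i<n. \<forall>l. \<bar>(shrink a b ^^ i) x $ l\<bar> \<le> B i $ l}"

lemma orbit_box_coordinates: "0 < n \<Longrightarrow> x \<in> orbit_box a b n B \<Longrightarrow> \<bar>x $ l\<bar> \<le> B 0 $ l"
  unfolding orbit_box_def by fastforce

lemma compact_orbit_box:
  assumes "0 < n" shows "compact (orbit_box a b n B)"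
proof -
  have "continuous_on UNIV (\<lambda>x. \<bar>(shrink a b ^^ i) x $ l\<bar>)" for i l
    using linear_shrink_pow[of i a b]
    by (intro continuous_intros linear_continuous_on bounded_linear_compose[OF bounded_linear_vec_nth])
      (simp add: linear_conv_bounded_linear)
  then have "closed (orbit_box a b n B)"
    unfolding orbit_box_def
    by (intro closed_Collect_all closed_Collect_imp closed_Collect_le continuous_on_const) simp_all
  moreover have "bounded (orbit_box a b n B)"
  proof -
    have "norm x \<le> B 0 $ 1 + B 0 $ 2 + B 0 $ 3" if "x \<in> orbit_box a b n B" for x
      using orbit_box_coordinates[OF assms that] norm_le_l1[of x] unfolding l1_def
      by (smt (verit))
    then show ?thesis unfolding bounded_iff by blast
  qed
  ultimately show ?thesis using compact_eq_bounded_closed by blast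
qed

lemma zero_in_orbit_box:
  assumes "\<And>i l. i < n \<Longrightarrow> 0 \<le> B i $ l" shows "0 \<in> orbit_box a b n B"
  using assms linear_shrink_pow by (simp add: orbit_box_def linear_0)

lemma abs_combination_le:
  "\<bar>x1\<bar> \<le> B1 \<Longrightarrow> \<bar>x2\<bar> \<le> B2 \<Longrightarrow> \<bar>x3\<bar> \<le> B3 \<Longrightarrow>
   \<bar>x1 * c1 + x2 * c2 + x3 * c3\<bar> \<le> \<bar>c1\<bar> * B1 + \<bar>c2\<bar> * B2 + \<bar>c3\<bar> * B3" for x1 x2 x3 c1 c2 c3 :: real
proof -
  assume "\<bar>x1\<bar> \<le> B1" "\<bar>x2\<bar> \<le> B2" "\<bar>x3\<bar> \<le> B3"
  then have "\<bar>c1\<bar> * \<bar>x1\<bar> + \<bar>c2\<bar> * \<bar>x2\<bar> + \<bar>c3\<bar> * \<bar>x3\<bar> \<le> \<bar>c1\<bar> * B1 + \<bar>c2\<bar> * B2 + \<bar>c3\<bar> * B3"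
    by (intro add_mono mult_left_mono) auto
  moreover have "\<bar>x1 * c1 + x2 * c2 + x3 * c3\<bar> \<le> \<bar>c1\<bar> * \<bar>x1\<bar> + \<bar>c2\<bar> * \<bar>x2\<bar> + \<bar>c3\<bar> * \<bar>x3\<bar>"
    by (simp add: abs_mult abs_triangle_ineq order_trans[OF abs_triangle_ineq] add_mono mult.commute)
  ultimately show ?thesis by linarith
qed

lemma orbit_box_shrink_pow_bound:
  assumes "0 < n" "x \<in> orbit_box a b n B"
  shows "\<bar>(shrink a b ^^ m) x $ l\<bar> \<le> \<bar>(shrink a b ^^ m) (vec3 1 0 0) $ l\<bar> * B 0 $ 1
    + \<bar>(shrink a b ^^ m) (vec3 0 1 0) $ l\<bar> * B 0 $ 2 + \<bar>(shrink a b ^^ m) (vec3 0 0 1) $ l\<bar> * B 0 $ 3"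
proof -
  obtain x1 x2 x3 where x: "x = vec3 x1 x2 x3" by (metis vec3_eta)
  have "\<bar>x1\<bar> \<le> B 0 $ 1" "\<bar>x2\<bar> \<le> B 0 $ 2" "\<bar>x3\<bar> \<le> B 0 $ 3"
    using orbit_box_coordinates[OF assms] x by (metis vec3_nth)+
  then show ?thesis
    unfolding x shrink_pow_vec3[of m a b x1 x2 x3] vector_add_component vector_scaleR_component
      real_scaleR_def
    by (rule abs_combination_le)
qed

lemma orbit_box_invariant:
  assumes n: "0 < n"
    and step: "\<And>i l. Suc i < n \<Longrightarrow> B (Suc i) $ l + \<bar>(shrink a b ^^ Suc i) half_e1 $ l\<bar> \<le> B i $ l"
    and closing: "\<And>l. \<bar>(shrink a b ^^ n) (vec3 1 0 0) $ l\<bar> * B 0 $ 1 + \<bar>(shrink a b ^^ n) (vec3 0 1 0) $ l\<bar> * B 0 $ 2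
        + \<bar>(shrink a b ^^ n) (vec3 0 0 1) $ l\<bar> * B 0 $ 3 + \<bar>(shrink a b ^^ n) half_e1 $ l\<bar> \<le> B (n - 1) $ l"
  shows "hutchinson a b (orbit_box a b n B) \<subseteq> orbit_box a b n B"
proof -
  let ?L = "shrink a b"
  have image: "?L (x + s) \<in> orbit_box a b n B"
    if x: "x \<in> orbit_box a b n B" and s: "s = half_e1 \<or> s = - half_e1" for x s
  proof -
    have expand: "(?L ^^ i) (?L (x + s)) = (?L ^^ Suc i) x + (?L ^^ Suc i) s" for i
    proof -
      have "(?L ^^ i) (?L (x + s)) = (?L ^^ Suc i) (x + s)" by (simp only: funpow_Suc_right o_apply)
      then show ?thesis by (simp only: linear_add[OF linear_shrink_pow])
    qed
    have digit: "\<bar>(?L ^^ j) s $ l\<bar> = \<bar>(?L ^^ j) half_e1 $ l\<bar>" for j l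
      using s by (auto simp: linear_neg[OF linear_shrink_pow])
    have "\<bar>(?L ^^ i) (?L (x + s)) $ l\<bar> \<le> B i $ l" if i: "i < n" for i l
    proof (cases "Suc i < n")
      case True
      then have "\<bar>(?L ^^ Suc i) x $ l\<bar> \<le> B (Suc i) $ l" using x unfolding orbit_box_def by blast
      moreover have "\<bar>(?L ^^ Suc i) x $ l + (?L ^^ Suc i) s $ l\<bar>
          \<le> \<bar>(?L ^^ Suc i) x $ l\<bar> + \<bar>(?L ^^ Suc i) s $ l\<bar>" by (rule abs_triangle_ineq)
      ultimately show ?thesis unfolding expand vector_add_component
        using step[OF True, of l] digit[of "Suc i" l] by linarith
    next
      case False
      then have ni: "Suc i = n" using i by simp
      have "\<bar>(?L ^^ n) x $ l\<bar> \<le> \<bar>(?L ^^ n) (vec3 1 0 0) $ l\<bar> * B 0 $ 1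
          + \<bar>(?L ^^ n) (vec3 0 1 0) $ l\<bar> * B 0 $ 2 + \<bar>(?L ^^ n) (vec3 0 0 1) $ l\<bar> * B 0 $ 3"
        by (rule orbit_box_shrink_pow_bound[OF n x])
      moreover have "\<bar>(?L ^^ n) x $ l + (?L ^^ n) s $ l\<bar>
          \<le> \<bar>(?L ^^ n) x $ l\<bar> + \<bar>(?L ^^ n) s $ l\<bar>" by (rule abs_triangle_ineq)
      moreover have "B (n - 1) $ l = B i $ l" by (simp add: ni[symmetric])
      ultimately show ?thesis unfolding expand ni vector_add_component
        using closing[of l] digit[of n l] by linarith
    qed
    then show ?thesis unfolding orbit_box_def by blast
  qed
  show ?thesis
  proof
    fix y assume "y \<in> hutchinson a b (orbit_box a b n B)"
    then obtain x where x: "x \<in> orbit_box a b n B" "y = f1 a b x \<or> y = f2 a b x"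
      unfolding hutchinson_def by blast
    then show "y \<in> orbit_box a b n B"
      using image[OF x(1), of half_e1] image[OF x(1), of "- half_e1"]
      by (auto simp: f1_shrink f2_shrink)
  qed
qed

lemma boxed_pair_from_orbit_box:
  fixes B :: "nat \<Rightarrow> real^3"
  assumes "0 < p"
    and "l1 ((shrink a b ^^ p) (vec3 1 0 0)) \<le> 1/2" "l1 ((shrink a b ^^ p) (vec3 0 1 0)) \<le> 1/2"
      "l1 ((shrink a b ^^ p) (vec3 0 0 1)) \<le> 1/2"
    and n: "0 < n"
    and nonneg: "\<And>i. i < n \<Longrightarrow> \<forall>l. 0 \<le> B i $ l"
    and step: "\<And>i. Suc i < n \<Longrightarrow>
      \<forall>l. B (Suc i) $ l + \<bar>(shrink a b ^^ Suc i) half_e1 $ l\<bar> \<le> B i $ l"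
    and closing: "\<forall>l. \<bar>(shrink a b ^^ n) (vec3 1 0 0) $ l\<bar> * B 0 $ 1
      + \<bar>(shrink a b ^^ n) (vec3 0 1 0) $ l\<bar> * B 0 $ 2 + \<bar>(shrink a b ^^ n) (vec3 0 0 1) $ l\<bar> * B 0 $ 3
      + \<bar>(shrink a b ^^ n) half_e1 $ l\<bar> \<le> B (n - 1) $ l"
  shows "boxed_pair a b p (orbit_box a b n B) (B 0 $ 1) (B 0 $ 2) (B 0 $ 3)"
proof unfold_locales
  show "l1 ((shrink a b ^^ p) x) \<le> l1 x / 2" for x
    using halving_from_columns assms(2-4) by blast
  show "compact (orbit_box a b n B)" using compact_orbit_box[OF n] .
  show "orbit_box a b n B \<noteq> {}" using zero_in_orbit_box nonneg by blast
  show "hutchinson a b (orbit_box a b n B) \<subseteq> orbit_box a b n B"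
    using orbit_box_invariant[OF n] step closing by blast
  show "\<forall>x\<in>orbit_box a b n B. \<bar>x $ 1\<bar> \<le> B 0 $ 1 \<and> \<bar>x $ 2\<bar> \<le> B 0 $ 2 \<and> \<bar>x $ 3\<bar> \<le> B 0 $ 3"
    using orbit_box_coordinates[OF n] by blast
qed (rule assms(1))

section \<open>The three twindragons\<close>

subsection \<open>The twindragon T(1,-1)\<close>

definition bounds_C :: "(real^3) list" where
  "bounds_C =
    [vec3 (127/100) (123/100) (91/100),
     vec3 (51/50) (49/50) (33/50),
     vec3 (89/100) (17/20) (53/100),
     vec3 (41/50) (33/50) (23/50),
     vec3 (3/5) (14/25) (21/50),
     vec3 (29/50) (12/25) (31/100),
     vec3 (1/2) (37/100) (3/10),
     vec3 (43/100) (8/25) (13/50),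
     vec3 (7/20) (1/4) (11/50),
     vec3 (31/100) (6/25) (9/50),
     vec3 (7/25) (9/50) (4/25)]"

interpretation C: boxed_pair "1" "-1" 7 "orbit_box 1 (-1) 11 (nth bounds_C)"
  "bounds_C ! 0 $ 1" "bounds_C ! 0 $ 2" "bounds_C ! 0 $ 3"
  by (rule boxed_pair_from_orbit_box)
    (auto simp: bounds_C_def less_Suc_eq forall_3 numeral_eq_Suc shrink_vec3 half_e1_def l1_def)

lemma C_radii: "C.box_radius_ok 2 (2,2,1)" "C.box_radius_ok (2 * 2) (5,4,3)"
  unfolding C.box_radius_ok_def by (simp_all add: bounds_C_def)

definition points_C :: "point_witness list" where
  "points_C = [((-2,1,0),1,[(-2,1,0),(-1,0,1),(-1,2,-1),(1,-2,1),(1,0,-1),(2,-1,0)],(-2,1,0)),((-1,0,-1),1,[(-1,0,-1),(1,0,1)],(-1,0,-1)),((-1,0,1),1,[(-1,0,1),(-1,2,-1),(1,-2,1),(1,0,-1)],(-1,0,1)),((-1,2,-1),1,[(-1,0,1),(-1,2,-1),(1,-2,1),(1,0,-1)],(-1,2,-1)),((1,-2,1),1,[(-1,0,1),(-1,2,-1),(1,-2,1),(1,0,-1)],(1,-2,1)),((1,0,-1),1,[(-1,0,1),(-1,2,-1),(1,-2,1),(1,0,-1)],(1,0,-1)),((1,0,1),1,[(-1,0,-1),(1,0,1)],(1,0,1)),((2,-1,0),1,[(-2,1,0),(-1,0,1),(-1,2,-1),(1,-2,1),(1,0,-1),(2,-1,0)],(2,-1,0))]"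

definition faces_C :: "face_witness list" where
  "faces_C = [((-1,0,0),[(-2,0,0),(-2,0,2),(-2,2,-2),(-2,2,0),(-2,4,-2),(2,-4,2),(2,-2,0),(2,-2,2),(2,0,-2),(2,0,0),(2,0,2)],(-2,0,0),(-2,0,2)),((-1,1,-1),[(-2,0,-2),(-2,0,0),(-2,0,2),(-2,2,-2),(-2,2,0),(-2,4,-2),(2,-4,2),(2,-2,0),(2,-2,2),(2,0,-2),(2,0,0)],(-2,2,-2),(-2,0,-2)),((-1,1,0),[(-2,0,0),(-2,0,2),(-2,2,-2),(-2,2,0),(-2,4,-2),(2,-4,2),(2,-2,0),(2,-2,2),(2,0,-2),(2,0,0)],(-2,2,0),(-2,0,2)),((0,-1,0),[(-2,0,-2),(-2,0,0),(-2,0,2),(-2,2,-2),(-2,2,0),(-2,4,-2),(0,0,-2),(0,0,2),(1,-3,1),(1,1,1),(2,-4,2),(2,-2,0),(2,-2,2),(2,0,-2),(2,0,0)],(1,-3,1),(-2,0,-2)),((0,-1,1),[(-2,0,0),(-2,0,2),(-2,2,-2),(-2,2,0),(-2,4,-2),(0,-2,2),(0,2,-2),(2,-4,2),(2,-2,0),(2,-2,2),(2,0,-2),(2,0,0)],(0,-2,2),(-2,0,2)),((0,0,-1),[(-2,0,-2),(-2,0,0),(-2,0,2),(-2,2,-2),(-2,2,0),(-2,4,-2),(0,0,-2),(0,0,2),(2,-4,2),(2,-2,0),(2,-2,2),(2,0,-2),(2,0,0)],(0,0,-2),(-2,0,-2)),((0,0,1),[(-2,0,-2),(-2,0,0),(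-2,0,2),(-2,2,-2),(-2,2,0),(-2,4,-2),(0,0,-2),(0,0,2),(2,-4,2),(2,-2,0),(2,-2,2),(2,0,-2),(2,0,0)],(0,0,2),(-2,0,2)),((0,1,-1),[(-2,0,0),(-2,0,2),(-2,2,-2),(-2,2,0),(-2,4,-2),(0,-2,2),(0,2,-2),(2,-4,2),(2,-2,0),(2,-2,2),(2,0,-2),(2,0,0)],(0,2,-2),(2,0,-2)),((0,1,0),[(-2,0,-2),(-2,0,0),(-2,0,2),(-2,2,-2),(-2,2,0),(-2,4,-2),(-1,-1,-1),(-1,3,-1),(0,-2,0),(0,0,-2),(0,0,2),(0,2,0),(2,-4,2),(2,-2,0),(2,-2,2),(2,0,-2),(2,0,0),(2,0,2)],(-1,3,-1),(0,2,0)),((1,-1,0),[(-2,0,0),(-2,0,2),(-2,2,-2),(-2,2,0),(-2,4,-2),(2,-4,2),(2,-2,0),(2,-2,2),(2,0,-2),(2,0,0)],(2,-2,0),(2,-4,2)),((1,-1,1),[(-2,0,-2),(-2,0,0),(-2,0,2),(-2,2,-2),(-2,2,0),(-2,4,-2),(2,-4,2),(2,-2,0),(2,-2,2),(2,0,-2),(2,0,0)],(2,-2,2),(2,-4,2)),((1,0,0),[(-4,2,0),(-2,0,0),(-2,0,2),(-2,2,-2),(-2,2,0),(-2,4,-2),(0,2,0),(2,-4,2),(2,-2,0),(2,-2,2),(2,0,-2),(2,0,0),(2,0,2)],(2,0,0),(0,2,0))]"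

definition others_C :: "pair_witness list" where
  "others_C = []"

lemma C_certificate:
  "certificate_ok 1 (-1) (2,2,1) 3 2 (5,4,3) 4 points_C faces_C others_C"
  by code_simp

subsection \<open>The twindragon T(-1,1)\<close>

definition bounds_B :: "(real^3) list" where
  "bounds_B =
    [vec3 (7/5) (6/5) (101/100),
     vec3 (23/20) (19/20) (19/25),
     vec3 (77/100) (41/50) (63/100),
     vec3 (7/10) (3/4) (11/25),
     vec3 (3/5) (59/100) (2/5),
     vec3 (49/100) (57/100) (7/20),
     vec3 (9/20) (23/50) (29/100),
     vec3 (8/25) (21/50) (27/100),
     vec3 (29/100) (37/100) (1/5),
     vec3 (23/100) (8/25) (9/50),
     vec3 (1/5) (3/10) (3/20)]"

interpretation B: boxed_pair "-1" "1" 7 "orbit_box (-1) 1 11 (nth bounds_B)"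
  "bounds_B ! 0 $ 1" "bounds_B ! 0 $ 2" "bounds_B ! 0 $ 3"
  by (rule boxed_pair_from_orbit_box)
    (auto simp: bounds_B_def less_Suc_eq forall_3 numeral_eq_Suc shrink_vec3 half_e1_def l1_def)

lemma B_radii: "B.box_radius_ok 2 (2,2,2)" "B.box_radius_ok (2 * 4) (11,9,8)"
  unfolding B.box_radius_ok_def by (simp_all add: bounds_B_def)

definition points_B :: "point_witness list" where
  "points_B = [((-2,-1,0),1,[(-2,-1,0),(-1,-2,-1),(1,2,1),(2,1,0)],(-2,-1,0)),((-1,-2,-1),1,[(-1,-2,-1),(1,2,1)],(-1,-2,-1)),((1,2,1),1,[(-1,-2,-1),(1,2,1)],(1,2,1)),((2,1,0),1,[(-2,-1,0),(-1,-2,-1),(1,2,1),(2,1,0)],(2,1,0))]"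

definition faces_B :: "face_witness list" where
  "faces_B = [((-2,0,1),[(-8,0,4),(-7,3,5),(-4,-4,0),(-4,0,0),(-4,0,4),(-4,4,4),(-2,6,6),(0,4,0),(4,-4,-4),(4,0,-4),(4,0,0),(4,4,0),(4,8,4),(6,-2,-2),(8,0,-4),(8,4,0),(9,3,-3)],(-8,0,4),(-7,3,5)),((-1,-1,0),[(-4,-8,-4),(-4,-4,0),(-4,0,0),(-4,0,4),(-4,4,4),(4,-4,-4),(4,0,-4),(4,0,0),(4,4,0)],(-4,-4,0),(-4,-8,-4)),((-1,0,0),[(-8,-4,0),(-4,-8,-4),(-4,-4,0),(-4,0,0),(-4,0,4),(-4,4,4),(0,-4,0),(4,-4,-4),(4,0,-4),(4,0,0),(4,4,0)],(-4,0,0),(-8,-4,0)),((-1,0,1),[(-8,0,4),(-6,2,6),(-4,-4,0),(-4,0,0),(-4,0,4),(-4,4,4),(2,2,-2),(4,-4,-4),(4,0,-4),(4,0,0),(4,4,0),(8,0,-4)],(-6,2,6),(-4,0,4)),((-1,1,1),[(-4,-4,0),(-4,0,0),(-4,0,4),(-4,4,4),(-2,6,6),(0,4,0),(4,-4,-4),(4,0,-4),(4,0,0),(4,4,0),(4,8,4),(6,-2,-2),(8,4,0)],(-4,4,4),(-2,6,6)),((0,-1,-1),[(-4,-8,-4),(-4,-4,0),(-4,0,0),(-4,0,4),(-4,4,4),(0,-4,-4),(0,4,4),(4,-4,-4),(4,0,-4),(4,0,0),(4,4,0)],(0,-4,-4),(-4,-8,-4)),((0,-1,0),[(-8,0,4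),(-4,-4,0),(-4,0,0),(-4,0,4),(-4,4,4),(-3,-5,1),(-3,3,1),(-2,-2,2),(0,-4,0),(0,4,0),(4,-4,-4),(4,0,-4),(4,0,0),(4,4,0),(6,-2,-6),(8,0,-4)],(-3,-5,1),(0,-4,0)),((0,1,0),[(-8,0,4),(-6,2,6),(-4,-4,0),(-4,0,0),(-4,0,4),(-4,4,4),(0,-4,0),(0,4,0),(2,2,-2),(3,-3,-1),(3,5,-1),(4,-4,-4),(4,0,-4),(4,0,0),(4,4,0),(8,0,-4)],(3,5,-1),(0,4,0)),((0,1,1),[(-4,-4,0),(-4,0,0),(-4,0,4),(-4,4,4),(0,-4,-4),(0,4,4),(4,-4,-4),(4,0,-4),(4,0,0),(4,4,0),(4,8,4)],(0,4,4),(4,8,4)),((1,-1,-1),[(-4,-4,0),(-4,0,0),(-4,0,4),(-4,4,4),(-2,6,6),(0,4,0),(4,-4,-4),(4,0,-4),(4,0,0),(4,4,0),(4,8,4),(6,-2,-2),(8,4,0)],(4,-4,-4),(6,-2,-2)),((1,0,-1),[(-8,0,4),(-4,-4,0),(-4,0,0),(-4,0,4),(-4,4,4),(-2,-2,2),(4,-4,-4),(4,0,-4),(4,0,0),(4,4,0),(6,-2,-6),(8,0,-4)],(6,-2,-6),(4,0,-4)),((1,0,0),[(-4,-4,0),(-4,0,0),(-4,0,4),(-4,4,4),(0,4,0),(4,-4,-4),(4,0,-4),(4,0,0),(4,4,0),(4,8,4),(8,4,0)],(4,0,0),(8,4,0)),((1,1,0),[(-4,-4,0),(-4,0,0),(-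4,0,4),(-4,4,4),(4,-4,-4),(4,0,-4),(4,0,0),(4,4,0),(4,8,4)],(4,4,0),(4,8,4)),((2,0,-1),[(-9,-3,3),(-8,-4,0),(-8,0,4),(-6,2,2),(-4,-8,-4),(-4,-4,0),(-4,0,0),(-4,0,4),(-4,4,4),(0,-4,0),(2,-6,-6),(4,-4,-4),(4,0,-4),(4,0,0),(4,4,0),(7,-3,-5),(8,0,-4)],(8,0,-4),(7,-3,-5))]"

definition others_B :: "pair_witness list" where
  "others_B = []"

lemma B_certificate:
  "certificate_ok (-1) 1 (2,2,2) 4 4 (11,9,8) 6 points_B faces_B others_B"
  by code_simp

subsection \<open>The twindragon T(0,1)\<close>

definition bounds_D :: "(real^3) list" where
  "bounds_D =
    [vec3 (99/50) (131/100) (27/20),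
     vec3 (173/100) (131/100) (11/10),
     vec3 (8/5) (53/50) (97/100),
     vec3 (141/100) (93/100) (9/10),
     vec3 (119/100) (43/50) (4/5),
     vec3 (101/100) (19/25) (69/100),
     vec3 1 (13/20) (3/5),
     vec3 (22/25) (14/25) (59/100),
     vec3 (73/100) (11/20) (53/100),
     vec3 (33/50) (49/100) (9/20),
     vec3 (63/100) (41/100) (41/100),
     vec3 (27/50) (37/100) (39/100),
     vec3 (23/50) (7/20) (17/50),
     vec3 (43/100) (3/10) (3/10),
     vec3 (2/5) (13/50) (7/25),
     vec3 (17/50) (6/25) (13/50),
     vec3 (3/10) (11/50) (23/100)]"

interpretation D: boxed_pair "0" "1" 8 "orbit_box 0 1 17 (nth bounds_D)"
  "bounds_D ! 0 $ 1" "bounds_D ! 0 $ 2" "bounds_D ! 0 $ 3"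
  by (rule boxed_pair_from_orbit_box)
    (auto simp: bounds_D_def less_Suc_eq forall_3 numeral_eq_Suc shrink_vec3 half_e1_def l1_def)

lemma D_radii: "D.box_radius_ok 2 (3,2,2)" "D.box_radius_ok (2 * 16) (63,41,43)"
  unfolding D.box_radius_ok_def by (simp_all add: bounds_D_def)

definition points_D :: "point_witness list" where
  "points_D = [((-3,-1,2),1,[(-3,-1,2),(-3,1,1),(-1,-2,2),(-1,2,-1),(1,-2,1),(1,2,-2),(3,-1,-1),(3,1,-2)],(-3,-1,2)),((-3,1,1),1,[(-3,-1,2),(-3,1,1),(-1,-2,2),(-1,2,-1),(1,-2,1),(1,2,-2),(3,-1,-1),(3,1,-2)],(-3,1,1)),((-2,-1,1),1,[(-3,-1,2),(-3,1,1),(-2,-1,1),(-1,-2,2),(-1,2,-1),(1,-2,1),(1,2,-2),(2,1,-1),(3,-1,-1),(3,1,-2)],(-2,-1,1)),((-2,2,0),1,[(-3,-1,2),(-3,1,1),(-2,2,0),(-1,-2,2),(-1,2,-1),(1,-2,1),(1,2,-2),(2,-2,0),(3,-1,-1),(3,1,-2)],(-2,2,0)),((-1,-2,2),1,[(-3,-1,2),(-3,1,1),(-1,-2,2),(-1,2,-1),(1,-2,1),(1,2,-2),(3,-1,-1),(3,1,-2)],(-1,-2,2)),((-1,2,-1),1,[(-3,-1,2),(-3,1,1),(-1,-2,2),(-1,2,-1),(1,-2,1),(1,2,-2),(3,-1,-1),(3,1,-2)],(-1,2,-1)),((1,-2,1),1,[(-3,-1,2),(-3,1,1),(-1,-2,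2),(-1,2,-1),(1,-2,1),(1,2,-2),(3,-1,-1),(3,1,-2)],(1,-2,1)),((1,2,-2),1,[(-3,-1,2),(-3,1,1),(-1,-2,2),(-1,2,-1),(1,-2,1),(1,2,-2),(3,-1,-1),(3,1,-2)],(1,2,-2)),((2,-2,0),1,[(-3,-1,2),(-3,1,1),(-2,2,0),(-1,-2,2),(-1,2,-1),(1,-2,1),(1,2,-2),(2,-2,0),(3,-1,-1),(3,1,-2)],(2,-2,0)),((2,1,-1),1,[(-3,-1,2),(-3,1,1),(-2,-1,1),(-1,-2,2),(-1,2,-1),(1,-2,1),(1,2,-2),(2,1,-1),(3,-1,-1),(3,1,-2)],(2,1,-1)),((3,-1,-1),1,[(-3,-1,2),(-3,1,1),(-1,-2,2),(-1,2,-1),(1,-2,1),(1,2,-2),(3,-1,-1),(3,1,-2)],(3,-1,-1)),((3,1,-2),1,[(-3,-1,2),(-3,1,1),(-1,-2,2),(-1,2,-1),(1,-2,1),(1,2,-2),(3,-1,-1),(3,1,-2)],(3,1,-2))]"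

definition faces_D :: "face_witness list" where
  "faces_D = [((-2,0,1),[(-48,-16,32),(-48,16,16),(-24,4,12),(-24,20,4),(-16,-32,32),(-16,-16,16),(-16,0,0),(-16,0,16),(-16,16,0),(-16,32,-16),(-8,-20,12),(-8,-20,20),(-8,12,-12),(8,-12,4),(16,-32,16),(16,-16,0),(16,0,-16),(16,0,0),(16,16,-16),(16,32,-32),(24,12,-20),(40,4,-20),(48,-16,-16),(48,16,-32)],(-24,4,12),(-48,16,16)),((-1,-1,1),[(-48,-16,32),(-48,16,16),(-24,4,12),(-24,20,4),(-16,-32,32),(-16,-16,16),(-16,0,0),(-16,0,16),(-16,16,0),(-16,32,-16),(-8,-20,12),(-8,-20,20),(-8,12,-12),(8,-12,4),(16,-32,16),(16,-16,0),(16,0,-16),(16,0,0),(16,16,-16),(16,32,-32),(24,12,-20),(40,4,-20),(48,-16,-16),(48,16,-32)],(-8,-20,12),(16,-16,0)),((-1,0,0),[(-48,-16,32),(-48,16,16),(-32,-16,16),(-32,8,8),(-24,24,0),(-16,-32,32),(-16,-24,24),(-16,-16,16),(-16,0,0),(-16,0,16),(-16,8,-8),(-16,16,0),(-16,32,-16),(-4,0,-4),(0,-24,8),(0,-16,16),(0,8,8),(8,-8,0),(16,-32,16),(16,-16,0),(16,0,-16),(16,0,0),(16,8,-8),(16,16,-16),(16,32,-32),(28,0,-4),(32,8,-24),(48,-16,-16),(48,16,-32)],(-4,0,-4),(-32,-16,16)),((-1,0,1),[(-24,4,12),(-24,20,4),(-16,-16,16),(-16,-4,20),(-16,0,0),(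-16,0,16),(-16,16,0),(-8,-20,12),(-8,-20,20),(-8,4,-4),(-8,12,-12),(8,-12,4),(16,-16,0),(16,-4,-12),(16,0,-16),(16,0,0),(16,16,-16),(24,4,-4),(24,12,-20),(40,4,-20)],(-16,-4,20),(-16,0,16)),((-1,1,0),[(-48,-16,32),(-48,16,16),(-32,-8,24),(-16,-32,32),(-16,-16,16),(-16,-8,8),(-16,0,0),(-16,0,16),(-16,16,0),(-16,32,-16),(-8,8,0),(0,-8,-8),(0,24,-8),(16,-32,16),(16,-16,0),(16,-8,8),(16,0,-16),(16,0,0),(16,16,-16),(16,24,-24),(16,32,-32),(24,-24,0),(32,-8,-8),(48,-16,-16),(48,16,-32)],(-8,8,0),(-16,0,16)),((0,-1,0),[(-32,-8,24),(-28,0,4),(-16,-16,16),(-16,-8,8),(-16,0,0),(-16,0,16),(-16,16,0),(-10,4,10),(-8,8,0),(0,-16,0),(0,-8,-8),(0,16,0),(0,24,-8),(1,-22,3),(1,10,3),(4,0,4),(16,-16,0),(16,-8,8),(16,0,-16),(16,0,0),(16,16,-16),(16,24,-24),(22,4,-22),(24,-24,0),(32,-8,-8)],(1,-22,3),(0,-16,0)),((0,-1,1),[(-48,-16,32),(-48,16,16),(-24,4,12),(-24,20,4),(-16,-32,32),(-16,-16,16),(-16,0,0),(-16,0,16),(-16,16,0),(-16,32,-16),(-8,-20,12),(-8,-20,20),(-8,12,-12),(8,-12,4),(16,-32,16),(16,-16,0),(16,0,-16),(16,0,0),(16,16,-16),(16,32,-32),(24,12,-20),(40,4,-20),(48,-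16,-16),(48,16,-32)],(-8,-20,20),(-16,0,16)),((0,1,-1),[(-48,-16,32),(-48,16,16),(-40,-4,20),(-24,-12,20),(-16,-32,32),(-16,-16,16),(-16,0,0),(-16,0,16),(-16,16,0),(-16,32,-16),(-8,12,-4),(8,-12,12),(8,20,-20),(8,20,-12),(16,-32,16),(16,-16,0),(16,0,-16),(16,0,0),(16,16,-16),(16,32,-32),(24,-20,-4),(24,-4,-12),(48,-16,-16),(48,16,-32)],(8,20,-20),(-16,0,0)),((0,1,0),[(-32,-8,24),(-28,0,4),(-16,-16,16),(-16,-8,8),(-16,0,0),(-16,0,16),(-16,16,0),(-10,4,10),(-8,8,0),(0,-16,0),(0,-8,-8),(0,16,0),(0,24,-8),(1,-22,3),(1,10,3),(4,0,4),(16,-16,0),(16,-8,8),(16,0,-16),(16,0,0),(16,16,-16),(16,24,-24),(22,4,-22),(24,-24,0),(32,-8,-8)],(1,10,3),(0,16,0)),((1,-1,0),[(-32,8,8),(-24,24,0),(-16,-24,24),(-16,-16,16),(-16,0,0),(-16,0,16),(-16,8,-8),(-16,16,0),(0,-24,8),(0,8,8),(8,-8,0),(16,-16,0),(16,0,-16),(16,0,0),(16,8,-8),(16,16,-16),(32,8,-24)],(8,-8,0),(16,-16,0)),((1,0,-1),[(-40,-4,20),(-24,-12,20),(-24,-4,4),(-16,-16,16),(-16,0,0),(-16,0,16),(-16,4,12),(-16,16,0),(-8,12,-4),(8,-12,12),(8,-4,4),(8,20,-20),(8,20,-12),(16,-16,0),(16,0,-16),(16,0,0),(16,4,-20),(1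6,16,-16),(24,-20,-4),(24,-4,-12)],(16,4,-20),(16,0,-16)),((1,0,0),[(-48,-16,32),(-48,16,16),(-40,-4,20),(-32,16,0),(-24,-12,20),(-24,-4,4),(-16,-32,32),(-16,-16,16),(-16,0,0),(-16,0,16),(-16,16,0),(-16,32,-16),(-8,12,-4),(0,16,0),(8,-12,12),(8,-4,4),(8,20,-20),(8,20,-12),(16,-32,16),(16,-16,0),(16,0,-16),(16,0,0),(16,16,-16),(16,32,-32),(24,-20,-4),(24,-4,-12),(48,-16,-16),(48,16,-32)],(8,-4,4),(0,16,0)),((1,1,-1),[(-48,-16,32),(-48,16,16),(-24,4,12),(-24,20,4),(-16,-32,32),(-16,-16,16),(-16,0,0),(-16,0,16),(-16,16,0),(-16,32,-16),(-8,-20,12),(-8,-20,20),(-8,12,-12),(8,-12,4),(16,-32,16),(16,-16,0),(16,0,-16),(16,0,0),(16,16,-16),(16,32,-32),(24,12,-20),(40,4,-20),(48,-16,-16),(48,16,-32)],(24,12,-20),(48,16,-32)),((2,0,-1),[(-48,-16,32),(-48,16,16),(-32,8,8),(-24,24,0),(-20,0,12),(-16,-32,32),(-16,-24,24),(-16,-16,16),(-16,0,0),(-16,0,16),(-16,8,-8),(-16,16,0),(-16,32,-16),(0,-24,8),(0,8,8),(8,-8,0),(16,-32,16),(16,-16,0),(16,0,-16),(16,0,0),(16,8,-8),(16,16,-16),(16,32,-32),(32,8,-24),(44,0,-20),(48,-16,-16),(48,16,-32)],(44,0,-20),(16,-16,0))]"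

definition others_D :: "pair_witness list" where
  "others_D = [((-2,1,0),2,[(-6,-2,4),(-6,2,2),(-4,2,0),(-3,2,-1),(-2,-4,4),(-2,4,-2),(0,-4,2),(0,4,-2),(2,-4,2),(2,4,-4),(4,-2,0),(5,-2,-1),(6,-2,-2),(6,2,-4)],(-4,2,0),(-3,2,-1)),((0,-2,1),8,[(-28,0,12),(-24,-8,16),(-24,8,8),(-16,16,0),(-14,-4,14),(-8,-16,16),(-8,16,-8),(-1,-18,13),(-1,14,-3),(0,-16,8),(0,16,-8),(8,-16,8),(8,16,-16),(16,-16,0),(18,12,-18),(20,0,-4),(24,-8,-8),(24,8,-16)],(0,-16,8),(-1,-18,13)),((2,1,-2),4,[(-14,0,6),(-12,-4,8),(-12,4,4),(-10,0,2),(-9,-6,9),(-8,8,0),(-7,-2,7),(-4,-8,8),(-4,8,-4),(4,-8,4),(4,8,-8),(7,2,-7),(8,-8,0),(9,6,-9),(10,0,-2),(12,-4,-4),(12,4,-8),(14,0,-6)],(9,6,-9),(7,2,-7)),((-3,0,1),2,[(-7,0,3),(-6,-2,4),(-6,2,2),(-5,0,1),(-4,4,0),(-2,-4,4),(-2,4,-2),(2,-4,2),(2,4,-4),(4,-4,0),(5,0,-1),(6,-2,-2),(6,2,-4),(7,0,-3)],(-5,0,1),(-7,0,3)),((2,-1,0),2,[(-6,-2,4),(-6,2,2),(-4,2,0),(-3,2,-1),(-2,-4,4),(-2,4,-2),(0,-4,2),(0,4,-2),(2,-4,2),(2,4,-4),(4,-2,0),(5,-2,-1),(6,-2,-2),(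6,2,-4)],(4,-2,0),(5,-2,-1)),((0,2,-1),8,[(-28,0,12),(-24,-8,16),(-24,8,8),(-16,16,0),(-14,-4,14),(-8,-16,16),(-8,16,-8),(0,-16,8),(0,16,-8),(7,-18,5),(7,14,-11),(8,-16,8),(8,16,-16),(16,-16,0),(18,12,-18),(20,0,-4),(24,-8,-8),(24,8,-16)],(0,16,-8),(7,14,-11)),((-2,-1,2),4,[(-14,0,6),(-12,-4,8),(-12,4,4),(-10,0,2),(-9,-6,9),(-8,8,0),(-7,-2,7),(-4,-8,8),(-4,8,-4),(4,-8,4),(4,8,-8),(7,2,-7),(8,-8,0),(9,6,-9),(10,0,-2),(12,-4,-4),(12,4,-8),(14,0,-6)],(-7,-2,7),(-9,-6,9)),((3,0,-1),2,[(-7,0,3),(-6,-2,4),(-6,2,2),(-5,0,1),(-4,4,0),(-2,-4,4),(-2,4,-2),(2,-4,2),(2,4,-4),(4,-4,0),(5,0,-1),(6,-2,-2),(6,2,-4),(7,0,-3)],(5,0,-1),(7,0,-3))]"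

lemma D_certificate:
  "certificate_ok 0 1 (3,2,2) 7 16 (63,41,43) 9 points_D faces_D others_D"
  by code_simp

theorem proposition7p2:
  shows
  "card (neighbors (twindragon 1 (-1))) = 20 \<and>
   card {k \<in> neighbors (twindragon 1 (-1)). is_face (twindragon 1 (-1)) k} = 12 \<and>
   card {k \<in> neighbors (twindragon 1 (-1)). point_neighbor (twindragon 1 (-1)) k} = 8 \<and>
   card (neighbors (twindragon (-1) 1)) = 18 \<and>
   card {k \<in> neighbors (twindragon (-1) 1). is_face (twindragon (-1) 1) k} = 14 \<and>
   card {k \<in> neighbors (twindragon (-1) 1). point_neighbor (twindragon (-1) 1) k} = 4 \<and>
   card (neighbors (twindragon 0 1)) = 34 \<and>
   card {k \<in> neighbors (twindragon 0 1). is_face (twindragon 0 1) k} = 14 \<and>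
   card {k \<in> neighbors (twindragon 0 1). point_neighbor (twindragon 0 1) k} = 12 \<and>
   card {k \<in> neighbors (twindragon 0 1). \<not> is_face (twindragon 0 1) k \<and>
                                          \<not> point_neighbor (twindragon 0 1) k} = 8 \<and>
   (\<forall>k \<in> neighbors (twindragon 0 1). \<not> is_face (twindragon 0 1) k \<and>
        \<not> point_neighbor (twindragon 0 1) k \<longrightarrow>
        finite (Bset (twindragon 0 1) k) \<and> card (Bset (twindragon 0 1) k) \<ge> 2)"
proof -
  note C = C.neighbor_census[OF C_radii C_certificate]
  note B = B.neighbor_census[OF B_radii B_certificate]
  note D = D.neighbor_census[OF D_radii D_certificate]
  have "length points_C = 8" "length faces_C = 12" "length others_C = 0"
    "length points_B = 4" "length faces_B = 14" "length others_B = 0"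
    "length points_D = 12" "length faces_D = 14" "length others_D = 8"
    by (simp_all add: points_C_def faces_C_def others_C_def points_B_def faces_B_def others_B_def
        points_D_def faces_D_def others_D_def)
  then show ?thesis using C B D by simp
qed

end
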